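(* Let $R$ be a commutative ring, $I$ an ideal of $R$ and $n\ge 3$. Then $\mathrm{EO}_{2n}(R,I)\subseteq \mathrm{EO}^1_{2n}(R,I)$.
   Context: Let $\sigma$ be the permutation of $\{1,\dots,2n\}$ with $\sigma(2i)=2i-1$, $\sigma(2i-1)=2i$. Let $\widetilde\psi_n=\sum_{i=1}^n(e_{2i-1,2i}+e_{2i,2i-1})$ and $\mathrm{O}_{2n}(R)=\{\alpha\in\mathrm{GL}_{2n}(R):\alpha^t\widetilde\psi_n\alpha=\widetilde\psi_n\}$. For $z\in R$ and $1\le i\ne j\le 2n$ with $i\ne\sigma(j)$, $oe_{ij}(z)=1_{2n}+z e_{ij}-z e_{\sigma(j)\sigma(i)}$. $\mathrm{EO}_{2n}(R)$ is generated by all $oe_{ij}(z)$; $\mathrm{EO}_{2n}(I)$ is generated by the $oe_{ij}(x)$, $x\in I$; $\mathrm{EO}_{2n}(R,I)$ is the normal closure of $\mathrm{EO}_{2n}(I)$ in $\mathrm{EO}_{2n}(R)$. $\mathrm{EO}^1_{2n}(R,I)$ is the subgroup of $\mathrm{EO}_{2n}(R)$ generated by the elements $oe_{1i}(a)$ and $oe_{j1}(x)$ with $a\in R$, $x\in I$, $3\le i,j\le 2n$. *)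

theory Defs
  imports "Jordan_Normal_Form.Matrix"
begin

text \<open>Indices are 1-based as in the paper: matrix entry (i,j) with 1 \<le> i,j \<le> 2n
  is stored at JNF position (i-1, j-1).\<close>

definition sig :: "nat \<Rightarrow> nat" where
  "sig k = (if even k then k - 1 else k + 1)"

definition is_ideal :: "'a::comm_ring_1 set \<Rightarrow> bool" where
  "is_ideal I \<longleftrightarrow> 0 \<in> I \<and> (\<forall>x\<in>I. \<forall>y\<in>I. x + y \<in> I) \<and> (\<forall>r x. x \<in> I \<longrightarrow> r * x \<in> I)"

definition oe :: "nat \<Rightarrow> nat \<Rightarrow> nat \<Rightarrow> 'a::comm_ring_1 \<Rightarrow> 'a mat" where
  "oe n i j z = mat (2*n) (2*n) (\<lambda>(a,b).
      (if a = b then 1 else 0)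
    + (if a + 1 = i \<and> b + 1 = j then z else 0)
    - (if a + 1 = sig j \<and> b + 1 = sig i then z else 0))"

definition oe_index :: "nat \<Rightarrow> nat \<Rightarrow> nat \<Rightarrow> bool" where
  "oe_index n i j \<longleftrightarrow> 1 \<le> i \<and> i \<le> 2*n \<and> 1 \<le> j \<and> j \<le> 2*n \<and> i \<noteq> j \<and> i \<noteq> sig j"

inductive_set gen_subgroup :: "nat \<Rightarrow> 'a::comm_ring_1 mat set \<Rightarrow> 'a mat set"
  for n :: nat and S :: "'a mat set" where
  one: "1\<^sub>m (2*n) \<in> gen_subgroup n S"
| gen: "a \<in> gen_subgroup n S \<Longrightarrow> s \<in> S \<Longrightarrow> a * s \<in> gen_subgroup n S"
| inv: "a \<in> gen_subgroup n S \<Longrightarrow> s \<in> S \<Longrightarrow> t \<in> carrier_mat (2*n) (2*n)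
        \<Longrightarrow> s * t = 1\<^sub>m (2*n) \<Longrightarrow> t * s = 1\<^sub>m (2*n) \<Longrightarrow> a * t \<in> gen_subgroup n S"

definition EO :: "nat \<Rightarrow> 'a::comm_ring_1 mat set" where
  "EO n = gen_subgroup n {oe n i j z | i j z. oe_index n i j}"

definition EO_I :: "nat \<Rightarrow> 'a::comm_ring_1 set \<Rightarrow> 'a mat set" where
  "EO_I n I = gen_subgroup n {oe n i j x | i j x. oe_index n i j \<and> x \<in> I}"

definition EO_rel :: "nat \<Rightarrow> 'a::comm_ring_1 set \<Rightarrow> 'a mat set" where
  "EO_rel n I = gen_subgroup n
     {g * h * g' | g h g'. g \<in> EO n \<and> h \<in> EO_I n I \<and> g' \<in> carrier_mat (2*n) (2*n)
        \<and> g * g' = 1\<^sub>m (2*n) \<and> g' * g = 1\<^sub>m (2*n)}"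

definition EO1_rel :: "nat \<Rightarrow> 'a::comm_ring_1 set \<Rightarrow> 'a mat set" where
  "EO1_rel n I = gen_subgroup n
     ({oe n 1 i a | i a. 3 \<le> i \<and> i \<le> 2*n} \<union> {oe n j 1 x | j x. 3 \<le> j \<and> j \<le> 2*n \<and> x \<in> I})"

end

theory Submission
  imports Defs
begin

text \<open>The proof passes through the subgroup generated by relative Eichler--Siegel--Dickson
  transvections \<open>T(u,v)\<close>: \<open>u, v\<close> span a totally isotropic subspace, \<open>v \<equiv> 0 mod I\<close>, and both are
  orthogonal to some basis vector \<open>e\<^sub>h\<close>. Every generator \<open>oe\<^sub>i\<^sub>j(x)\<close>, \<open>x \<in> I\<close>, is such a transvection,
  and conjugating one by \<open>oe\<^sub>k\<^sub>l(c)\<close> yields a product of such transvections; hence their group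
  contains \<open>EO\<^sub>2\<^sub>n(R,I)\<close>. Conversely, after splitting off \<open>e\<^sub>h\<close>-components, a transvection that vanishes
  on a hyperbolic pair \<open>(e, f)\<close> is the commutator of \<open>T(e,u)\<close> and \<open>T(f,-v)\<close>, and transvections
  \<open>T(e\<^sub>h, w)\<close> decompose coordinatewise into generators of \<open>EO\<^sup>1\<^sub>2\<^sub>n(R,I)\<close> or into elements normalizing
  it. When the pair is not the first one, a third hyperbolic pair (this is where \<open>n \<ge> 3\<close> enters)
  is used to move the \<open>e\<^sub>2\<close>-component of \<open>u\<close> out of the way.\<close>

lemma sig_sig [simp]: "sig (sig k) = k"
  unfolding sig_def by auto

lemma sig_eq_iff [simp]: "sig a = sig b \<longleftrightarrow> a = b"
  by (metis sig_sig)

lemma sig_simps [simp]: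
  "sig 1 = 2" "sig (Suc 0) = 2" "sig 2 = 1"
  "sig (Suc (2*i)) = Suc (Suc (2*i))" "sig (Suc (Suc (2*i))) = Suc (2*i)"
  unfolding sig_def by auto

lemma sig_neq_self: "1 \<le> k \<Longrightarrow> sig k \<noteq> k"
  unfolding sig_def by auto

lemma sig_bounds: "1 \<le> k \<Longrightarrow> k \<le> 2*n \<Longrightarrow> 1 \<le> sig k \<and> sig k \<le> 2*n"
  unfolding sig_def by auto presburger

lemma sig_bounds_ge3: "3 \<le> k \<Longrightarrow> k \<le> 2*n \<Longrightarrow> 3 \<le> sig k \<and> sig k \<le> 2*n"
  unfolding sig_def by (auto; presburger)

lemma sig_pair: "1 \<le> h \<Longrightarrow> {h, sig h} = {2*((h-1) div 2)+1, 2*((h-1) div 2)+2}"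
  unfolding sig_def by auto

lemma exists_index_avoiding:
  fixes m a b c d :: nat
  assumes "5 \<le> m"
  shows "\<exists>h. 1 \<le> h \<and> h \<le> m \<and> h \<noteq> a \<and> h \<noteq> b \<and> h \<noteq> c \<and> h \<noteq> d"
proof (rule ccontr)
  assume "\<not> ?thesis"
  then have "{1..5::nat} \<subseteq> {a,b,c,d}" using assms by (auto simp: subset_iff)
  then have "card {1..5::nat} \<le> card {a,b,c,d}" by (intro card_mono) auto
  also have "\<dots> \<le> 4" using card_length[of "[a,b,c,d]"] by simp
  finally show False by simp
qed

section \<open>The hyperbolic quadratic form\<close>

text \<open>The form \<open>bform x y = x\<^sup>t \<psi> y\<close>
  is the polar form of \<open>qform\<close>, whose isometry group is \<open>O\<^sub>2\<^sub>n(R)\<close>.\<close>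

definition is_vec :: "nat \<Rightarrow> (nat \<Rightarrow> 'a::comm_ring_1) \<Rightarrow> bool" where
  "is_vec n w \<longleftrightarrow> (\<forall>i. (i = 0 \<or> 2*n < i) \<longrightarrow> w i = 0)"

definition bform :: "nat \<Rightarrow> (nat \<Rightarrow> 'a::comm_ring_1) \<Rightarrow> (nat \<Rightarrow> 'a) \<Rightarrow> 'a" where
  "bform n x y = (\<Sum>j<2*n. x (sig (j+1)) * y (j+1))"

definition qform :: "nat \<Rightarrow> (nat \<Rightarrow> 'a::comm_ring_1) \<Rightarrow> 'a" where
  "qform n x = (\<Sum>i<n. x (2*i+1) * x (2*i+2))"

definition unit_vec :: "nat \<Rightarrow> nat \<Rightarrow> 'a::comm_ring_1" where
  "unit_vec i = (\<lambda>k. if k = i then 1 else 0)"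

lemma unit_vec_same [simp]: "unit_vec i i = 1"
  by (simp add: unit_vec_def)

lemma unit_vec_other: "k \<noteq> i \<Longrightarrow> unit_vec i k = 0"
  by (simp add: unit_vec_def)

lemma unit_vec_sig: "unit_vec i (sig k) = unit_vec (sig i) k"
  unfolding unit_vec_def by (metis sig_sig)

lemma sum_lessThan_double: "(\<Sum>j<2*(n::nat). f j) = (\<Sum>i<n. f (2*i) + f (2*i+1))"
  by (induction n) (auto simp: add.assoc)

lemma bform_pairs: "bform n x y = (\<Sum>i<n. x (2*i+2) * y (2*i+1) + x (2*i+1) * y (2*i+2))"
  unfolding bform_def sum_lessThan_double by (simp add: add.commute)

lemma bform_commute: "bform n x y = bform n y x"
  unfolding bform_pairs by (simp add: algebra_simps)

lemma bform_self: "bform n x x = 2 * qform n x"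
  unfolding bform_pairs qform_def by (simp add: algebra_simps sum_distrib_left)

lemma bform_add_left [simp]: "bform n (\<lambda>k. x k + y k) z = bform n x z + bform n y z"
  and bform_add_right [simp]: "bform n z (\<lambda>k. x k + y k) = bform n z x + bform n z y"
  and bform_diff_left [simp]: "bform n (\<lambda>k. x k - y k) z = bform n x z - bform n y z"
  and bform_diff_right [simp]: "bform n z (\<lambda>k. x k - y k) = bform n z x - bform n z y"
  and bform_minus_left [simp]: "bform n (\<lambda>k. - x k) z = - bform n x z"
  and bform_minus_right [simp]: "bform n z (\<lambda>k. - x k) = - bform n z x"
  and bform_scale_left [simp]: "bform n (\<lambda>k. c * x k) z = c * bform n x z"
  and bform_scale_right [simp]: "bform n z (\<lambda>k. c * x k) = c * bform n z x"
  and bform_scale_left' [simp]: "bform n (\<lambda>k. x k * c) z = c * bform n x z"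
  and bform_scale_right' [simp]: "bform n z (\<lambda>k. x k * c) = c * bform n z x"
  and bform_zero_left [simp]: "bform n (\<lambda>k. 0) z = 0"
  and bform_zero_right [simp]: "bform n z (\<lambda>k. 0) = 0"
  unfolding bform_def
  by (simp_all add: algebra_simps sum.distrib sum_subtractf sum_negf sum_distrib_left)

lemma qform_add [simp]: "qform n (\<lambda>k. x k + y k) = qform n x + qform n y + bform n x y"
  and qform_diff [simp]: "qform n (\<lambda>k. x k - y k) = qform n x + qform n y - bform n x y"
  and qform_minus [simp]: "qform n (\<lambda>k. - x k) = qform n x"
  and qform_scale [simp]: "qform n (\<lambda>k. c * x k) = c * c * qform n x"
  and qform_scale' [simp]: "qform n (\<lambda>k. x k * c) = c * c * qform n x"
  and qform_zero [simp]: "qform n (\<lambda>k. 0) = 0"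
  unfolding bform_pairs qform_def
  by (simp_all add: algebra_simps sum.distrib sum_subtractf sum_distrib_left)

lemma qform_unit_vec [simp]: "qform n (unit_vec i) = 0"
  unfolding qform_def unit_vec_def by (rule sum.neutral) auto

lemma bform_unit_vec_left [simp]:
  assumes "1 \<le> i" "i \<le> 2*n"
  shows "bform n (unit_vec i) y = y (sig i)"
proof -
  have s: "1 \<le> sig i" "sig i \<le> 2*n" using sig_bounds[OF assms] by auto
  have "unit_vec i (sig (j+1)) * y (j+1) = (if j = sig i - 1 then y (sig i) else 0)" for j
  proof -
    have "sig (j+1) = i \<longleftrightarrow> j + 1 = sig i" by (metis sig_sig)
    also have "\<dots> \<longleftrightarrow> j = sig i - 1" using s by auto
    finally show ?thesis unfolding unit_vec_def using s by auto
  qed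
  then have "bform n (unit_vec i) y = (\<Sum>j<2*n. if j = sig i - 1 then y (sig i) else 0)"
    by (simp add: bform_def)
  also have "\<dots> = y (sig i)" using s by simp
  finally show ?thesis .
qed

lemma bform_unit_vec_right [simp]: "1 \<le> i \<Longrightarrow> i \<le> 2*n \<Longrightarrow> bform n y (unit_vec i) = y (sig i)"
  by (subst bform_commute) simp

lemma is_vec_add [simp]: "is_vec n x \<Longrightarrow> is_vec n y \<Longrightarrow> is_vec n (\<lambda>k. x k + y k)"
  and is_vec_diff [simp]: "is_vec n x \<Longrightarrow> is_vec n y \<Longrightarrow> is_vec n (\<lambda>k. x k - y k)"
  and is_vec_minus [simp]: "is_vec n x \<Longrightarrow> is_vec n (\<lambda>k. - x k)"
  and is_vec_scale [simp]: "is_vec n x \<Longrightarrow> is_vec n (\<lambda>k. c * x k)"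
  and is_vec_zero [simp]: "is_vec n (\<lambda>k. 0)"
  and is_vec_unit_vec [simp]: "1 \<le> i \<Longrightarrow> i \<le> 2*n \<Longrightarrow> is_vec n (unit_vec i)"
  unfolding is_vec_def unit_vec_def by auto

definition mat_act :: "nat \<Rightarrow> 'a::comm_ring_1 mat \<Rightarrow> (nat \<Rightarrow> 'a) \<Rightarrow> (nat \<Rightarrow> 'a)" where
  "mat_act n M w = (\<lambda>i. if 1 \<le> i \<and> i \<le> 2*n then (\<Sum>j<2*n. M $$ (i-1, j) * w (j+1)) else 0)"

lemma sum_lessThan_delta: "(a::nat) < m \<Longrightarrow> (\<Sum>j<m. (if a = j then c else 0) * f j) = (c::'a::comm_ring_1) * f a"
  by (simp add: if_distrib[of "\<lambda>x. x * _"] cong: if_cong)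

lemma mat_act_mult:
  assumes "M \<in> carrier_mat (2*n) (2*n)" "N \<in> carrier_mat (2*n) (2*n)"
  shows "mat_act n (M * N) w = mat_act n M (mat_act n N w)"
proof
  fix i
  show "mat_act n (M * N) w i = mat_act n M (mat_act n N w) i"
  proof (cases "1 \<le> i \<and> i \<le> 2*n")
    case True
    have "mat_act n (M * N) w i = (\<Sum>j<2*n. (\<Sum>k<2*n. M $$ (i-1,k) * N $$ (k,j)) * w (j+1))"
      unfolding mat_act_def using True assms
      by (auto simp: scalar_prod_def atLeast0LessThan intro!: sum.cong)
    also have "\<dots> = (\<Sum>j<2*n. \<Sum>k<2*n. M $$ (i-1,k) * (N $$ (k,j) * w (j+1)))"
      by (simp add: sum_distrib_right mult.assoc)
    also have "\<dots> = (\<Sum>k<2*n. M $$ (i-1,k) * (\<Sum>j<2*n. N $$ (k,j) * w (j+1)))"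
      by (subst sum.swap) (simp add: sum_distrib_left)
    also have "\<dots> = mat_act n M (mat_act n N w) i"
      unfolding mat_act_def using True by simp
    finally show ?thesis .
  qed (auto simp: mat_act_def)
qed

lemma mat_act_one:
  assumes "is_vec n w"
  shows "mat_act n (1\<^sub>m (2*n)) w = w"
proof
  fix i
  show "mat_act n (1\<^sub>m (2*n)) w i = w i"
  proof (cases "1 \<le> i \<and> i \<le> 2*n")
    case True
    have "mat_act n (1\<^sub>m (2*n)) w i = (\<Sum>j<2*n. (if i - 1 = j then 1 else 0) * w (j+1))"
      unfolding mat_act_def using True by (auto intro!: sum.cong)
    also have "\<dots> = w i" using True by (subst sum_lessThan_delta) auto
    finally show ?thesis .
  next
    case False
    then have "i = 0 \<or> 2*n < i" by auto
    then show ?thesis using assms False unfolding mat_act_def is_vec_def by auto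
  qed
qed

lemma mat_eq_by_act:
  assumes "M \<in> carrier_mat (2*n) (2*n)" "N \<in> carrier_mat (2*n) (2*n)"
    and "\<And>w. is_vec n w \<Longrightarrow> mat_act n M w = mat_act n N w"
  shows "M = N"
proof (rule eq_matI)
  fix a b assume "a < dim_row N" "b < dim_col N"
  then have ab: "a < 2*n" "b < 2*n" using assms by auto
  have entry: "mat_act n P (unit_vec (b+1)) (a+1) = P $$ (a,b)" for P
  proof -
    have "mat_act n P (unit_vec (b+1)) (a+1) = (\<Sum>j<2*n. (if b = j then 1 else 0) * P $$ (a, j))"
      unfolding mat_act_def unit_vec_def using ab by (auto intro!: sum.cong)
    also have "\<dots> = P $$ (a,b)" using ab by (subst sum_lessThan_delta) auto
    finally show ?thesis .
  qed
  show "M $$ (a,b) = N $$ (a,b)"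
    using entry[of M] entry[of N] assms(3)[of "unit_vec (b+1)"] ab by simp
qed (use assms in auto)

lemma mult_carrier_sq [simp]:
  "(A :: 'a::semiring_1 mat) \<in> carrier_mat (2*n) (2*n) \<Longrightarrow> B \<in> carrier_mat (2*n) (2*n) \<Longrightarrow> A * B \<in> carrier_mat (2*n) (2*n)"
  by (rule mult_carrier_mat)

lemma mult_one_sq [simp]:
  "(A :: 'a::semiring_1 mat) \<in> carrier_mat (2*n) (2*n) \<Longrightarrow> A * 1\<^sub>m (2*n) = A"
  "(A :: 'a::semiring_1 mat) \<in> carrier_mat (2*n) (2*n) \<Longrightarrow> 1\<^sub>m (2*n) * A = A"
  by simp_all

lemma mult_assoc_sq:
  "(A :: 'a::semiring_1 mat) \<in> carrier_mat (2*n) (2*n) \<Longrightarrow> B \<in> carrier_mat (2*n) (2*n) \<Longrightarrow> C \<in> carrier_mat (2*n) (2*n)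
    \<Longrightarrow> A * B * C = A * (B * C)"
  by (rule assoc_mult_mat)

lemma mat_inverse_unique:
  fixes s :: "'a::semiring_1 mat"
  assumes "s \<in> carrier_mat m m" "t \<in> carrier_mat m m" "t' \<in> carrier_mat m m"
    and "t * s = 1\<^sub>m m" "s * t' = 1\<^sub>m m"
  shows "t = t'"
proof -
  have "t = t * (s * t')" using assms by (simp add: right_mult_one_mat[OF assms(2)])
  also have "\<dots> = (t * s) * t'" using assms by (metis assoc_mult_mat)
  also have "\<dots> = t'" using assms by (simp add: left_mult_one_mat[OF assms(3)])
  finally show ?thesis .
qed

lemma conj_mult:
  fixes t :: "'a::semiring_1 mat"
  assumes "t \<in> carrier_mat (2*n) (2*n)" "t' \<in> carrier_mat (2*n) (2*n)"
    and "A \<in> carrier_mat (2*n) (2*n)" "B \<in> carrier_mat (2*n) (2*n)" and "t' * t = 1\<^sub>m (2*n)"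
  shows "t * (A * B) * t' = (t * A * t') * (t * B * t')"
proof -
  have "(t * A * t') * (t * B * t') = t * A * (t' * t) * B * t'"
    using assms(1-4) by (simp add: mult_assoc_sq)
  also have "\<dots> = t * A * B * t'"
    using assms by (simp add: right_mult_one_mat[OF mult_carrier_mat[OF assms(1,3)]])
  also have "\<dots> = t * (A * B) * t'"
    using assms(1-4) by (simp add: mult_assoc_sq)
  finally show ?thesis by simp
qed

section \<open>Eichler--Siegel--Dickson transvections\<close>

text \<open>For isotropic \<open>u\<close> orthogonal to \<open>v\<close>, \<open>esd n u v\<close> is the ESD transvection
  \<open>w \<mapsto> w + u B(v,w) - v B(u,w) - Q(v) u B(u,w)\<close>, an element of \<open>O\<^sub>2\<^sub>n(R)\<close>; \<open>esd_vec\<close> is its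
  action on vectors. Entry \<open>(a,b)\<close> of the matrix multiplies \<open>w\<^sub>b\<^sub>+\<^sub>1\<close>, which \<open>B(v,w)\<close> pairs
  with \<open>v\<^sub>s\<^sub>i\<^sub>g \<^sub>(\<^sub>b\<^sub>+\<^sub>1\<^sub>)\<close>.\<close>

definition esd :: "nat \<Rightarrow> (nat \<Rightarrow> 'a::comm_ring_1) \<Rightarrow> (nat \<Rightarrow> 'a) \<Rightarrow> 'a mat" where
  "esd n u v = mat (2*n) (2*n) (\<lambda>(a,b). (if a = b then 1 else 0) + u (a+1) * v (sig (b+1))
       - v (a+1) * u (sig (b+1)) - qform n v * u (a+1) * u (sig (b+1)))"

definition esd_vec :: "nat \<Rightarrow> (nat \<Rightarrow> 'a::comm_ring_1) \<Rightarrow> (nat \<Rightarrow> 'a) \<Rightarrow> (nat \<Rightarrow> 'a) \<Rightarrow> (nat \<Rightarrow> 'a)" where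
  "esd_vec n u v w = (\<lambda>k. w k + (bform n v w - qform n v * bform n u w) * u k - bform n u w * v k)"

lemma esd_carrier [simp]: "esd n u v \<in> carrier_mat (2*n) (2*n)"
  unfolding esd_def by simp

lemma is_vec_esd_vec [simp]: "is_vec n u \<Longrightarrow> is_vec n v \<Longrightarrow> is_vec n w \<Longrightarrow> is_vec n (esd_vec n u v w)"
  unfolding is_vec_def esd_vec_def by auto

lemma mat_act_esd:
  assumes "is_vec n u" "is_vec n v" "is_vec n w"
  shows "mat_act n (esd n u v) w = esd_vec n u v w"
proof
  fix i
  show "mat_act n (esd n u v) w i = esd_vec n u v w i"
  proof (cases "1 \<le> i \<and> i \<le> 2*n")
    case True
    have "mat_act n (esd n u v) w i = (\<Sum>j<2*n. (if i - 1 = j then 1 else 0) * w (j+1)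
       + u i * (v (sig (j+1)) * w (j+1)) - v i * (u (sig (j+1)) * w (j+1))
       - qform n v * u i * (u (sig (j+1)) * w (j+1)))"
      unfolding mat_act_def esd_def using True by (auto intro!: sum.cong simp: algebra_simps)
    also have "\<dots> = (\<Sum>j<2*n. (if i - 1 = j then 1 else 0) * w (j+1))
       + u i * bform n v w - v i * bform n u w - qform n v * u i * bform n u w"
      by (simp add: sum.distrib sum_subtractf sum_distrib_left[symmetric] bform_def)
    also have "\<dots> = w i + u i * bform n v w - v i * bform n u w - qform n v * u i * bform n u w"
      using True by (subst sum_lessThan_delta) auto
    finally show ?thesis unfolding esd_vec_def by (simp add: algebra_simps)
  next
    case False
    then have "i = 0 \<or> 2*n < i" by auto
    then show ?thesis using assms False unfolding mat_act_def is_vec_def esd_vec_def by auto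
  qed
qed

lemma esd_add_right:
  assumes "is_vec n a" "is_vec n b1" "is_vec n b2" "qform n a = 0" "bform n a b1 = 0" "bform n a b2 = 0"
  shows "esd n a b1 * esd n a b2 = esd n a (\<lambda>k. b1 k + b2 k)"
proof (rule mat_eq_by_act[of _ n])
  fix w :: "nat \<Rightarrow> 'a" assume "is_vec n w"
  moreover have "bform n b1 a = 0" "bform n b2 a = 0" "bform n a a = 0"
    using assms bform_commute bform_self by (metis mult_zero_right)+
  ultimately show "mat_act n (esd n a b1 * esd n a b2) w = mat_act n (esd n a (\<lambda>k. b1 k + b2 k)) w"
    using assms
    apply (simp add: mat_act_mult mat_act_esd)
    apply (simp add: esd_vec_def fun_eq_iff)
    by (simp add: algebra_simps bform_commute[of n b2 b1])
qed simp_all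

lemma esd_zero_right [simp]: "esd n u (\<lambda>k. 0) = 1\<^sub>m (2*n)"
  by (rule eq_matI) (auto simp: esd_def)

lemma esd_scale: "esd n (\<lambda>k. c * u k) v = esd n u (\<lambda>k. c * v k)"
  by (rule eq_matI) (auto simp: esd_def algebra_simps)

lemma esd_swap: "qform n u = 0 \<Longrightarrow> qform n v = 0 \<Longrightarrow> esd n u v = esd n (\<lambda>k. - v k) u"
  by (rule eq_matI) (auto simp: esd_def algebra_simps)

lemma esd_minus_minus: "esd n (\<lambda>k. - u k) (\<lambda>k. - v k) = esd n u v"
  by (rule eq_matI) (auto simp: esd_def algebra_simps)

lemma esd_multiple: "qform n a = 0 \<Longrightarrow> esd n a (\<lambda>k. c * a k) = 1\<^sub>m (2*n)"
  by (rule eq_matI) (auto simp: esd_def algebra_simps)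

lemma esd_inverse:
  assumes "is_vec n a" "is_vec n b" "qform n a = 0" "bform n a b = 0"
  shows "esd n a b * esd n a (\<lambda>k. - b k) = 1\<^sub>m (2*n)"
    and "esd n a (\<lambda>k. - b k) * esd n a b = 1\<^sub>m (2*n)"
  using esd_add_right[of n a b "\<lambda>k. - b k"] esd_add_right[of n a "\<lambda>k. - b k" b] assms by auto

lemma bform_esd_vec:
  assumes "qform n a = 0" "bform n a b = 0"
  shows "bform n (esd_vec n a b x) (esd_vec n a b y) = bform n x y"
proof -
  have "bform n a a = 0" "bform n b a = 0" using assms bform_self bform_commute by (metis mult_zero_right)+
  then show ?thesis using assms
    apply (simp add: esd_vec_def)
    by (simp add: algebra_simps bform_self bform_commute[of n b x] bform_commute[of n b y]
        bform_commute[of n a x] bform_commute[of n a y] bform_commute[of n y x])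
qed

lemma qform_esd_vec:
  assumes "qform n a = 0" "bform n a b = 0"
  shows "qform n (esd_vec n a b x) = qform n x"
proof -
  have "bform n a a = 0" "bform n b a = 0" using assms bform_self bform_commute by (metis mult_zero_right)+
  then show ?thesis using assms
    apply (simp add: esd_vec_def)
    by (simp add: algebra_simps bform_self bform_commute[of n b x] bform_commute[of n a x])
qed

lemma esd_vec_equivariant:
  assumes "qform n a = 0" "bform n a b = 0"
  shows "esd_vec n a b (esd_vec n u v x) = esd_vec n (esd_vec n a b u) (esd_vec n a b v) (esd_vec n a b x)"
proof -
  have "bform n a a = 0" "bform n b a = 0" using assms bform_self bform_commute by (metis mult_zero_right)+
  moreover have "esd_vec n (esd_vec n a b u) (esd_vec n a b v) (esd_vec n a b x) =
    (\<lambda>k. esd_vec n a b x k + (bform n v x - qform n v * bform n u x) * esd_vec n a b u k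
       - bform n u x * esd_vec n a b v k)"
    unfolding esd_vec_def[of n "esd_vec n a b u"] by (simp add: bform_esd_vec qform_esd_vec assms)
  ultimately show ?thesis using assms
    apply (simp add: esd_vec_def fun_eq_iff)
    by (simp add: algebra_simps)
qed

lemma esd_conj:
  assumes "is_vec n a" "is_vec n b" "is_vec n u" "is_vec n v" "qform n a = 0" "bform n a b = 0"
  shows "esd n a b * esd n u v * esd n a (\<lambda>k. - b k) = esd n (esd_vec n a b u) (esd_vec n a b v)"
proof (rule mat_eq_by_act[of _ n])
  fix w :: "nat \<Rightarrow> 'a" assume w: "is_vec n w"
  let ?w' = "esd_vec n a (\<lambda>k. - b k) w"
  have "esd_vec n a b ?w' = w"
    using mat_act_mult[of "esd n a b" n "esd n a (\<lambda>k. - b k)" w] esd_inverse(1)[of n a b]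
    using assms w by (simp add: mat_act_one mat_act_esd)
  moreover have "mat_act n (esd n a b * esd n u v * esd n a (\<lambda>k. - b k)) w = esd_vec n a b (esd_vec n u v ?w')"
    using assms w by (simp add: mat_act_mult mat_act_esd)
  ultimately show "mat_act n (esd n a b * esd n u v * esd n a (\<lambda>k. - b k)) w
      = mat_act n (esd n (esd_vec n a b u) (esd_vec n a b v)) w"
    using assms w by (simp add: esd_vec_equivariant mat_act_esd)
qed simp_all

lemma esd_add_left:
  assumes "is_vec n a1" "is_vec n a2" "is_vec n b"
    and "qform n a1 = 0" "qform n a2 = 0" "bform n a1 a2 = 0" "bform n a1 b = 0" "bform n a2 b = 0"
  shows "esd n (\<lambda>k. a1 k + a2 k) b = esd n a1 b * esd n a2 b * esd n a1 (\<lambda>k. qform n b * a2 k)"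
proof (rule mat_eq_by_act[of _ n])
  fix w :: "nat \<Rightarrow> 'a" assume "is_vec n w"
  moreover have "bform n a1 a1 = 0" "bform n a2 a2 = 0" using assms bform_self by (metis mult_zero_right)+
  moreover have "bform n a2 a1 = 0" "bform n b a1 = 0" "bform n b a2 = 0" using assms bform_commute by metis+
  ultimately show "mat_act n (esd n (\<lambda>k. a1 k + a2 k) b) w
      = mat_act n (esd n a1 b * esd n a2 b * esd n a1 (\<lambda>k. qform n b * a2 k)) w"
    using assms
    apply (simp add: mat_act_mult mat_act_esd)
    apply (simp add: esd_vec_def fun_eq_iff)
    by (simp add: algebra_simps bform_self)
qed simp_all

lemma esd_commutator:
  assumes p: "p < n" and s: "is_vec n u" "is_vec n v"
    and z: "u (2*p+1) = 0" "u (2*p+2) = 0" "v (2*p+1) = 0" "v (2*p+2) = 0"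
    and q: "qform n u = 0" "qform n v = 0" "bform n u v = 0"
  shows "esd n u v = esd n (unit_vec (2*p+1)) u * esd n (unit_vec (2*p+2)) (\<lambda>k. - v k)
                   * esd n (unit_vec (2*p+1)) (\<lambda>k. - u k) * esd n (unit_vec (2*p+2)) v"
proof -
  let ?e = "unit_vec (2*p+1) :: nat \<Rightarrow> 'a" and ?f = "unit_vec (2*p+2) :: nat \<Rightarrow> 'a"
  let ?u = "\<lambda>k. - u k" and ?v = "\<lambda>k. - v k"
  have se: "is_vec n ?e" "is_vec n ?f" using p by auto
  have conj: "esd n ?e u * esd n ?f ?v * esd n ?e ?u = esd n (\<lambda>k. ?f k + ?u k) ?v"
  proof -
    have "esd_vec n ?e u ?f = (\<lambda>k. ?f k + ?u k)" "esd_vec n ?e u ?v = ?v"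
      using p z q s by (simp_all add: esd_vec_def fun_eq_iff)
    moreover have "esd n ?e u * esd n ?f ?v * esd n ?e ?u = esd n (esd_vec n ?e u ?f) (esd_vec n ?e u ?v)"
      by (rule esd_conj) (use se s p z in auto)
    ultimately show ?thesis by simp
  qed
  have orth: "bform n ?f ?u = 0" "bform n ?f ?v = 0" "bform n ?u ?v = 0" "bform n ?u ?f = 0"
    using p z q by (auto simp: bform_commute[of n ?u])
  have "esd n (\<lambda>k. ?f k + ?u k) ?v = esd n ?f ?v * esd n ?u ?v"
    using esd_add_left[of n ?f ?u ?v] se s q orth by simp
  moreover have "esd n (\<lambda>k. ?u k + ?f k) ?v = esd n ?u ?v * esd n ?f ?v"
    using esd_add_left[of n ?u ?f ?v] se s q orth by simp
  moreover have "(\<lambda>k. ?u k + ?f k) = (\<lambda>k. ?f k + ?u k)" by (simp add: fun_eq_iff)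
  ultimately have "esd n ?e u * esd n ?f ?v * esd n ?e ?u * esd n ?f v = esd n ?u ?v * esd n ?f ?v * esd n ?f v"
    using conj by metis
  also have "\<dots> = esd n u v"
    using esd_inverse(2)[of n ?f v] se s p z by (simp add: mult_assoc_sq[of _ n] esd_minus_minus)
  finally show ?thesis by simp
qed

lemma esd_split:
  fixes u v :: "nat \<Rightarrow> 'a::comm_ring_1"
  assumes s: "is_vec n u" "is_vec n v" and h: "1 \<le> h" "h \<le> 2*n"
    and z: "u (sig h) = 0" "v (sig h) = 0"
    and q: "qform n u = 0" "qform n v = 0" "bform n u v = 0"
  shows "esd n u v = esd n (unit_vec h) (\<lambda>k. - (v h * u k))
     * (esd n (unit_vec h) (\<lambda>k. u h * (v k - v h * unit_vec h k))
     * esd n (\<lambda>k. u k - u h * unit_vec h k) (\<lambda>k. v k - v h * unit_vec h k))"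
proof -
  define v' where "v' = (\<lambda>k. v k - v h * unit_vec h k)"
  define u' where "u' = (\<lambda>k. u k - u h * unit_vec h k)"
  have se: "is_vec n (unit_vec h :: nat \<Rightarrow> 'a)" using h by auto
  have es: "unit_vec h (sig h) = (0::'a)" using sig_neq_self h by (simp add: unit_vec_other)
  have sv': "is_vec n v'" "is_vec n u'" unfolding v'_def u'_def using s se by auto
  have Bh: "bform n (unit_vec h) w = w (sig h)" "bform n w (unit_vec h) = w (sig h)" for w :: "nat \<Rightarrow> 'a"
    using h by auto
  have z': "v' (sig h) = 0" "u' (sig h) = 0" unfolding v'_def u'_def using z es by auto
  have qv': "qform n v' = 0" and qu': "qform n u' = 0" and Buv': "bform n u v' = 0"
    unfolding v'_def u'_def using q z Bh by simp_all
  have Bu'v': "bform n u' v' = 0" unfolding u'_def using Buv' z' Bh by simp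
  have "esd n u v = esd n u (\<lambda>k. v h * unit_vec h k) * esd n u v'"
  proof -
    have "esd n u (\<lambda>k. v h * unit_vec h k) * esd n u v' = esd n u (\<lambda>k. v h * unit_vec h k + v' k)"
      by (rule esd_add_right) (use s sv' se q z Bh Buv' in auto)
    moreover have "(\<lambda>k. v h * unit_vec h k + v' k) = v" unfolding v'_def by auto
    ultimately show ?thesis by simp
  qed
  moreover have "esd n u (\<lambda>k. v h * unit_vec h k) = esd n (unit_vec h) (\<lambda>k. - (v h * u k))"
  proof -
    have "esd n u (\<lambda>k. v h * unit_vec h k) = esd n (\<lambda>k. (- v h) * unit_vec h k) u"
      using esd_swap[of n u] q by simp
    also have "\<dots> = esd n (unit_vec h) (\<lambda>k. (- v h) * u k)" by (rule esd_scale)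
    finally show ?thesis by simp
  qed
  moreover have "esd n u v' = esd n (unit_vec h) (\<lambda>k. u h * v' k) * esd n u' v'"
  proof -
    have "esd n (\<lambda>k. u h * unit_vec h k + u' k) v' = esd n (\<lambda>k. u h * unit_vec h k) v' * esd n u' v'
        * esd n (\<lambda>k. u h * unit_vec h k) (\<lambda>k. qform n v' * u' k)"
      by (rule esd_add_left) (use s sv' se qu' Bh z' Bu'v' in auto)
    moreover have "(\<lambda>k. u h * unit_vec h k + u' k) = u" unfolding u'_def by auto
    ultimately show ?thesis using qv' by (simp add: esd_scale)
  qed
  ultimately show ?thesis unfolding v'_def u'_def by (simp add: mult_assoc_sq[of _ n])
qed

lemma oe_carrier [simp]: "oe n i j z \<in> carrier_mat (2*n) (2*n)"
  unfolding oe_def by simp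

lemma if_conj_eq_unit_vec: "(if a = i \<and> b = j then z else 0) = unit_vec i a * unit_vec j b * z"
  by (simp add: unit_vec_def)

lemma oe_eq_esd: "oe n i j z = esd n (unit_vec i) (\<lambda>k. z * unit_vec (sig j) k)"
  apply (rule eq_matI)
  unfolding oe_def esd_def
     apply (simp only: index_mat dim_row_mat dim_col_mat split)
     apply (simp only: unit_vec_sig qform_scale qform_unit_vec mult_zero_right diff_zero if_conj_eq_unit_vec sig_sig)
  by (simp_all add: algebra_simps)

lemma oe_swap: "oe n i j z = oe n (sig j) (sig i) (- z)"
  apply (rule eq_matI)
  unfolding oe_def
     apply (simp only: index_mat dim_row_mat dim_col_mat split)
     apply (simp only: if_conj_eq_unit_vec sig_sig)
  by (simp_all add: algebra_simps)

lemma esd_unit_vec_eq_oe: "esd n (unit_vec h) (\<lambda>k. z * unit_vec m k) = oe n h (sig m) z"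
  unfolding oe_eq_esd by simp

lemma oe_inverse:
  assumes "oe_index n i j"
  shows "oe n i j z * oe n i j (- z) = 1\<^sub>m (2*n)" "oe n i j (- z) * oe n i j z = 1\<^sub>m (2*n)"
proof -
  have r: "1 \<le> i" "i \<le> 2*n" "1 \<le> j" "j \<le> 2*n" "i \<noteq> j"
    using assms unfolding oe_index_def by auto
  moreover have "unit_vec (sig j) (sig i) = (0::'a)" using r by (simp add: unit_vec_def)
  ultimately have "bform n (unit_vec i) (\<lambda>k. z * unit_vec (sig j) k) = 0"
    by simp
  moreover have "(\<lambda>k. - z * unit_vec (sig j) k) = (\<lambda>k. - (z * unit_vec (sig j) k))" by simp
  ultimately show "oe n i j z * oe n i j (- z) = 1\<^sub>m (2*n)" "oe n i j (- z) * oe n i j z = 1\<^sub>m (2*n)"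
    unfolding oe_eq_esd using esd_inverse[of n "unit_vec i" "\<lambda>k. z * unit_vec (sig j) k"] r sig_bounds[of j n]
    by auto
qed

lemma oe_conj_esd:
  assumes "oe_index n i j" "is_vec n u" "is_vec n v"
  shows "oe n i j c * esd n u v * oe n i j (- c)
    = esd n (esd_vec n (unit_vec i) (\<lambda>k. c * unit_vec (sig j) k) u) (esd_vec n (unit_vec i) (\<lambda>k. c * unit_vec (sig j) k) v)"
proof -
  have r: "1 \<le> i" "i \<le> 2*n" "1 \<le> j" "j \<le> 2*n" "i \<noteq> j"
    using assms unfolding oe_index_def by auto
  have "unit_vec (sig j) (sig i) = (0::'a)" "unit_vec i j = (0::'a)" using r by (simp_all add: unit_vec_def)
  moreover have minus: "(\<lambda>k. - c * unit_vec (sig j) k) = (\<lambda>k. - (c * unit_vec (sig j) k))" by simp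
  ultimately show ?thesis unfolding oe_eq_esd minus
    by (intro esd_conj) (use r sig_bounds[of j n] assms in auto)
qed

lemma ideal_zero: "is_ideal I \<Longrightarrow> 0 \<in> I"
  and ideal_add: "is_ideal I \<Longrightarrow> x \<in> I \<Longrightarrow> y \<in> I \<Longrightarrow> x + y \<in> I"
  and ideal_mult_left: "is_ideal I \<Longrightarrow> x \<in> I \<Longrightarrow> r * x \<in> I"
  and ideal_mult_right: "is_ideal I \<Longrightarrow> x \<in> I \<Longrightarrow> x * r \<in> I"
  unfolding is_ideal_def by (auto simp: mult.commute)

lemma ideal_minus: "is_ideal I \<Longrightarrow> x \<in> I \<Longrightarrow> - x \<in> I"
  using ideal_mult_left[of I x "-1"] by simp

lemma ideal_diff: "is_ideal I \<Longrightarrow> x \<in> I \<Longrightarrow> y \<in> I \<Longrightarrow> x - y \<in> I"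
  using ideal_add[of I x "- y"] ideal_minus[of I y] by simp

lemma ideal_qform: "is_ideal I \<Longrightarrow> (\<And>k. v k \<in> I) \<Longrightarrow> qform n v \<in> I"
  unfolding qform_def
  by (induction n) (auto intro: ideal_add ideal_mult_left ideal_zero)

lemma gen_subgroup_carrier:
  assumes "S \<subseteq> carrier_mat (2*n) (2*n)" "x \<in> gen_subgroup n S"
  shows "x \<in> carrier_mat (2*n) (2*n)"
  using assms(2) by induction (use assms(1) in auto)

lemma gen_subgroup_mult:
  assumes S: "S \<subseteq> carrier_mat (2*n) (2*n)" and a: "a \<in> gen_subgroup n S"
    and b: "b \<in> gen_subgroup n S"
  shows "a * b \<in> gen_subgroup n S"
  using b
proof induction
  case one
  then show ?case using gen_subgroup_carrier[OF S a] a by simp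
next
  case (gen c s)
  have "a * (c * s) = (a * c) * s"
    using gen_subgroup_carrier[OF S a] gen_subgroup_carrier[OF S gen.hyps(1)] gen.hyps(2) S
    by (auto intro!: assoc_mult_mat[symmetric])
  then show ?case using gen gen_subgroup.gen by metis
next
  case (inv c s t)
  have "a * (c * t) = (a * c) * t"
    using gen_subgroup_carrier[OF S a] gen_subgroup_carrier[OF S inv.hyps(1)] inv.hyps(3)
    by (auto intro!: assoc_mult_mat[symmetric])
  then show ?case using inv gen_subgroup.inv by metis
qed

lemma gen_subgroup_gen:
  assumes "S \<subseteq> carrier_mat (2*n) (2*n)" "s \<in> S"
  shows "s \<in> gen_subgroup n S"
proof -
  have "1\<^sub>m (2*n) * s \<in> gen_subgroup n S" by (rule gen_subgroup.gen[OF gen_subgroup.one assms(2)])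
  then show ?thesis using assms by auto
qed

lemma gen_subgroup_least:
  assumes one: "1\<^sub>m (2*n) \<in> G" and mult: "\<And>a b. a \<in> G \<Longrightarrow> b \<in> G \<Longrightarrow> a * b \<in> G"
    and gens: "S \<subseteq> G"
    and inverses: "\<And>s t. s \<in> S \<Longrightarrow> t \<in> carrier_mat (2*n) (2*n) \<Longrightarrow> s * t = 1\<^sub>m (2*n) \<Longrightarrow> t * s = 1\<^sub>m (2*n) \<Longrightarrow> t \<in> G"
  shows "gen_subgroup n S \<subseteq> G"
proof
  fix x assume "x \<in> gen_subgroup n S"
  then show "x \<in> G"
  proof induction
    case one
    show ?case by (rule \<open>1\<^sub>m (2*n) \<in> G\<close>)
  next
    case (gen a s)
    then show ?case using mult gens by auto
  next
    case (inv a s t)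
    then show ?case using mult inverses by auto
  qed
qed

lemma gen_subgroup_left_inverse:
  assumes S: "S \<subseteq> carrier_mat (2*n) (2*n)"
    and S_inv: "\<And>s. s \<in> S \<Longrightarrow> \<exists>t\<in>carrier_mat (2*n) (2*n). s * t = 1\<^sub>m (2*n) \<and> t * s = 1\<^sub>m (2*n)"
    and x: "x \<in> gen_subgroup n S"
  shows "\<exists>y\<in>gen_subgroup n S. y * x = 1\<^sub>m (2*n)"
  using x
proof induction
  case one
  show ?case using gen_subgroup.one[of n S] by (intro bexI[of _ "1\<^sub>m (2*n)"]) auto
next
  case (gen a s)
  obtain a' where a': "a' \<in> gen_subgroup n S" "a' * a = 1\<^sub>m (2*n)" using gen.IH by blast
  obtain s' where s': "s' \<in> carrier_mat (2*n) (2*n)" "s * s' = 1\<^sub>m (2*n)" "s' * s = 1\<^sub>m (2*n)"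
    using S_inv[OF gen.hyps(2)] by blast
  have c: "a \<in> carrier_mat (2*n) (2*n)" "a' \<in> carrier_mat (2*n) (2*n)" "s \<in> carrier_mat (2*n) (2*n)"
    using a'(1) gen.hyps gen_subgroup_carrier[OF S] S by auto
  then have "s' * a' * (a * s) = s' * (a' * a) * s" using s'(1) by (simp add: mult_assoc_sq)
  then have "s' * a' * (a * s) = 1\<^sub>m (2*n)" using a'(2) s' c by simp
  moreover have "s' \<in> gen_subgroup n S"
    using gen_subgroup.inv[OF gen_subgroup.one gen.hyps(2) s'] s' by simp
  ultimately show ?case using gen_subgroup_mult[OF S] a'(1) by blast
next
  case (inv a s t)
  obtain a' where a': "a' \<in> gen_subgroup n S" "a' * a = 1\<^sub>m (2*n)" using inv.IH by blast
  have c: "a \<in> carrier_mat (2*n) (2*n)" "a' \<in> carrier_mat (2*n) (2*n)" "s \<in> carrier_mat (2*n) (2*n)"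
    using a'(1) inv.hyps gen_subgroup_carrier[OF S] S by auto
  then have "s * a' * (a * t) = s * (a' * a) * t" using inv.hyps(3) by (simp add: mult_assoc_sq)
  then have "s * a' * (a * t) = 1\<^sub>m (2*n)" using a'(2) inv.hyps c by simp
  then show ?case using gen_subgroup_mult[OF S gen_subgroup_gen[OF S inv.hyps(2)] a'(1)] by blast
qed

lemma gen_subgroup_inverse:
  assumes S: "S \<subseteq> carrier_mat (2*n) (2*n)"
    and S_inv: "\<And>s. s \<in> S \<Longrightarrow> \<exists>t\<in>carrier_mat (2*n) (2*n). s * t = 1\<^sub>m (2*n) \<and> t * s = 1\<^sub>m (2*n)"
    and x: "x \<in> gen_subgroup n S" and t: "t \<in> carrier_mat (2*n) (2*n)" "x * t = 1\<^sub>m (2*n)"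
  shows "t \<in> gen_subgroup n S"
proof -
  obtain y where y: "y \<in> gen_subgroup n S" "y * x = 1\<^sub>m (2*n)"
    using gen_subgroup_left_inverse[OF S S_inv x] by blast
  have "y = t" by (rule mat_inverse_unique[of x "2*n"]) (use x y t gen_subgroup_carrier[OF S] in auto)
  then show ?thesis using y by simp
qed

definition normalizes :: "nat \<Rightarrow> 'a::comm_ring_1 mat set \<Rightarrow> 'a mat \<Rightarrow> bool" where
  "normalizes n G s \<longleftrightarrow> (\<exists>s'. s \<in> carrier_mat (2*n) (2*n) \<and> s' \<in> carrier_mat (2*n) (2*n)
     \<and> s * s' = 1\<^sub>m (2*n) \<and> s' * s = 1\<^sub>m (2*n) \<and> (\<forall>X\<in>G. s * X * s' \<in> G))"

lemma normalizes_conj: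
  assumes "normalizes n G s" "t \<in> carrier_mat (2*n) (2*n)" "s * t = 1\<^sub>m (2*n)" "X \<in> G"
  shows "s * X * t \<in> G"
proof -
  obtain s' where s': "s \<in> carrier_mat (2*n) (2*n)" "s' \<in> carrier_mat (2*n) (2*n)"
    "s' * s = 1\<^sub>m (2*n)" "\<forall>X\<in>G. s * X * s' \<in> G"
    using assms(1) unfolding normalizes_def by blast
  have "s' = t" by (rule mat_inverse_unique[of s "2*n"]) (use s' assms in auto)
  then show ?thesis using s' assms by simp
qed

lemma normalizes_one: "G \<subseteq> carrier_mat (2*n) (2*n) \<Longrightarrow> normalizes n G (1\<^sub>m (2*n))"
  unfolding normalizes_def by (intro exI[of _ "1\<^sub>m (2*n)"]) auto

lemma normalizes_mult:
  assumes G: "G \<subseteq> carrier_mat (2*n) (2*n)" and "normalizes n G s" "normalizes n G r"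
  shows "normalizes n G (s * r)"
proof -
  obtain s' r' where c: "s \<in> carrier_mat (2*n) (2*n)" "s' \<in> carrier_mat (2*n) (2*n)"
      "r \<in> carrier_mat (2*n) (2*n)" "r' \<in> carrier_mat (2*n) (2*n)"
    and i: "s * s' = 1\<^sub>m (2*n)" "s' * s = 1\<^sub>m (2*n)" "r * r' = 1\<^sub>m (2*n)" "r' * r = 1\<^sub>m (2*n)"
    and conj: "\<forall>X\<in>G. s * X * s' \<in> G" "\<forall>X\<in>G. r * X * r' \<in> G"
    using assms(2,3) unfolding normalizes_def by blast
  have "s * r * (r' * s') = s * (r * r') * s'" "r' * s' * (s * r) = r' * (s' * s) * r"
    using c by (simp_all add: mult_assoc_sq)
  moreover have "s * r * X * (r' * s') = s * (r * X * r') * s'" if "X \<in> G" for X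
  proof -
    have "X \<in> carrier_mat (2*n) (2*n)" using that G by auto
    then show ?thesis using c by (simp add: mult_assoc_sq)
  qed
  ultimately show ?thesis
    unfolding normalizes_def using c i conj by (intro exI[of _ "r' * s'"]) auto
qed

lemma normalizes_member:
  assumes S: "S \<subseteq> carrier_mat (2*n) (2*n)" and "s \<in> gen_subgroup n S" "s' \<in> gen_subgroup n S"
    and "s * s' = 1\<^sub>m (2*n)" "s' * s = 1\<^sub>m (2*n)"
  shows "normalizes n (gen_subgroup n S) s"
  unfolding normalizes_def
proof (intro exI[of _ s'] conjI ballI)
  fix X assume "X \<in> gen_subgroup n S"
  show "s * X * s' \<in> gen_subgroup n S"
    using gen_subgroup_mult[OF S gen_subgroup_mult[OF S assms(2) \<open>X \<in> gen_subgroup n S\<close>] assms(3)] .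
qed (use assms gen_subgroup_carrier[OF S] in auto)

lemma normalizes_gen_subgroup:
  assumes S: "S \<subseteq> carrier_mat (2*n) (2*n)"
    and S_inv: "\<And>g. g \<in> S \<Longrightarrow> \<exists>t\<in>carrier_mat (2*n) (2*n). g * t = 1\<^sub>m (2*n) \<and> t * g = 1\<^sub>m (2*n)"
    and s: "s \<in> carrier_mat (2*n) (2*n)" "s' \<in> carrier_mat (2*n) (2*n)" "s * s' = 1\<^sub>m (2*n)" "s' * s = 1\<^sub>m (2*n)"
    and conj: "\<And>g. g \<in> S \<Longrightarrow> s * g * s' \<in> gen_subgroup n S"
  shows "normalizes n (gen_subgroup n S) s"
proof -
  let ?G = "{X \<in> carrier_mat (2*n) (2*n). s * X * s' \<in> gen_subgroup n S}"
  have "gen_subgroup n S \<subseteq> ?G"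
  proof (rule gen_subgroup_least)
    show "1\<^sub>m (2*n) \<in> ?G" using s gen_subgroup.one by simp
    show "a * b \<in> ?G" if "a \<in> ?G" "b \<in> ?G" for a b
      using that conj_mult[OF s(1,2), of a b] s(4) gen_subgroup_mult[OF S] by auto
    show "S \<subseteq> ?G" using S conj by auto
    show "t \<in> ?G" if "g \<in> S" "t \<in> carrier_mat (2*n) (2*n)" "g * t = 1\<^sub>m (2*n)" "t * g = 1\<^sub>m (2*n)" for g t
    proof -
      have "s * g * s' * (s * t * s') = s * (g * t) * s'"
        using conj_mult[OF s(1,2), of g t] s(4) that S by auto
      then have "s * g * s' * (s * t * s') = 1\<^sub>m (2*n)" using that s by simp
      then show ?thesis
        using gen_subgroup_inverse[OF S S_inv conj[OF that(1)]] that s by simp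
    qed
  qed
  then show ?thesis unfolding normalizes_def using s by blast
qed

text \<open>\<open>w \<mapsto> esd n (unit_vec h) w\<close> is a homomorphism on \<open>e\<^sub>h\<^sup>\<bottom>\<close>.\<close>

lemma esd_unit_vec_mem:
  assumes G: "1\<^sub>m (2*n) \<in> G" "\<And>a b. a \<in> G \<Longrightarrow> b \<in> G \<Longrightarrow> a * b \<in> G"
    and h: "1 \<le> h" "h \<le> 2*n" and w: "is_vec n w" "w (sig h) = 0"
    and pieces: "\<And>m. 1 \<le> m \<Longrightarrow> m \<le> 2*n \<Longrightarrow> esd n (unit_vec h) (\<lambda>k. w m * unit_vec m k) \<in> G"
  shows "esd n (unit_vec h) w \<in> G"
proof -
  have "j \<le> 2*n \<Longrightarrow> esd n (unit_vec h) (\<lambda>k. if k \<le> j then w k else 0) \<in> G" for j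
  proof (induction j)
    case 0
    have "(\<lambda>k. if k \<le> 0 then w k else 0) = (\<lambda>k. 0)" using w(1) unfolding is_vec_def by auto
    then show ?case using G by simp
  next
    case (Suc j)
    let ?wj = "\<lambda>k. if k \<le> j then w k else 0" and ?c = "\<lambda>k. w (Suc j) * unit_vec (Suc j) k"
    have "(\<lambda>k. if k \<le> Suc j then w k else 0) = (\<lambda>k. ?wj k + ?c k)"
      by (auto simp: fun_eq_iff unit_vec_def le_Suc_eq)
    moreover have "is_vec n ?wj" using w(1) unfolding is_vec_def by auto
    moreover have "is_vec n ?c" using Suc.prems by simp
    moreover have "?c (sig h) = 0" using w(2) by (auto simp: unit_vec_def)
    ultimately have "esd n (unit_vec h) (\<lambda>k. if k \<le> Suc j then w k else 0) = esd n (unit_vec h) ?wj * esd n (unit_vec h) ?c"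
      using h w by (simp add: esd_add_right)
    then show ?case using G Suc pieces by simp
  qed
  moreover have "(\<lambda>k. if k \<le> 2*n then w k else 0) = w"
    using w(1) unfolding is_vec_def by auto
  ultimately show ?thesis by (metis order_refl)
qed

section \<open>The subgroup \<open>EO\<^sup>1\<^sub>2\<^sub>n(R,I)\<close>\<close>

locale relative_EO =
  fixes n :: nat and I :: "'a::comm_ring_1 set"
  assumes ideal: "is_ideal I" and n_ge_3: "3 \<le> n"
begin

definition EO1_gens :: "'a mat set" where
  "EO1_gens = {oe n 1 i a | i a. 3 \<le> i \<and> i \<le> 2*n} \<union> {oe n j 1 x | j x. 3 \<le> j \<and> j \<le> 2*n \<and> x \<in> I}"

lemma EO1_rel_eq: "EO1_rel n I = gen_subgroup n EO1_gens"
  unfolding EO1_rel_def EO1_gens_def ..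

lemma EO1_gens_carrier: "EO1_gens \<subseteq> carrier_mat (2*n) (2*n)"
  unfolding EO1_gens_def by auto

lemma oe_index_1: "3 \<le> m \<Longrightarrow> m \<le> 2*n \<Longrightarrow> oe_index n 1 m \<and> oe_index n m 1"
  unfolding oe_index_def using sig_bounds_ge3[of m n] by auto

lemma EO1_gens_invertible:
  "g \<in> EO1_gens \<Longrightarrow> \<exists>t\<in>carrier_mat (2*n) (2*n). g * t = 1\<^sub>m (2*n) \<and> t * g = 1\<^sub>m (2*n)"
  unfolding EO1_gens_def using oe_inverse oe_index_1 oe_carrier by blast

lemma EO1_rel_carrier: "x \<in> EO1_rel n I \<Longrightarrow> x \<in> carrier_mat (2*n) (2*n)"
  using gen_subgroup_carrier[OF EO1_gens_carrier] unfolding EO1_rel_eq by blast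

lemma EO1_rel_one: "1\<^sub>m (2*n) \<in> EO1_rel n I"
  unfolding EO1_rel_eq by (rule gen_subgroup.one)

lemma EO1_rel_mult: "a \<in> EO1_rel n I \<Longrightarrow> b \<in> EO1_rel n I \<Longrightarrow> a * b \<in> EO1_rel n I"
  unfolding EO1_rel_eq by (rule gen_subgroup_mult[OF EO1_gens_carrier])

lemma oe_1i_mem_EO1_rel: "3 \<le> i \<Longrightarrow> i \<le> 2*n \<Longrightarrow> oe n 1 i a \<in> EO1_rel n I"
  unfolding EO1_rel_eq by (rule gen_subgroup_gen[OF EO1_gens_carrier]) (auto simp: EO1_gens_def)

lemma oe_j1_mem_EO1_rel: "3 \<le> j \<Longrightarrow> j \<le> 2*n \<Longrightarrow> x \<in> I \<Longrightarrow> oe n j 1 x \<in> EO1_rel n I"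
  unfolding EO1_rel_eq by (rule gen_subgroup_gen[OF EO1_gens_carrier]) (auto simp: EO1_gens_def)

lemma esd_unit_vec_mem_EO1_rel_of_pieces:
  assumes "1 \<le> h" "h \<le> 2*n" "is_vec n w" "w (sig h) = 0"
    and "\<And>m. 1 \<le> m \<Longrightarrow> m \<le> 2*n \<Longrightarrow> esd n (unit_vec h) (\<lambda>k. w m * unit_vec m k) \<in> EO1_rel n I"
  shows "esd n (unit_vec h) w \<in> EO1_rel n I"
  using esd_unit_vec_mem[of n "EO1_rel n I"] EO1_rel_one EO1_rel_mult assms by blast

lemma esd_e1_mem_EO1_rel:
  assumes "is_vec n w" "w 2 = 0"
  shows "esd n (unit_vec 1) w \<in> EO1_rel n I"
proof (rule esd_unit_vec_mem_EO1_rel_of_pieces)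
  fix m assume m: "1 \<le> m" "m \<le> 2*n"
  show "esd n (unit_vec 1) (\<lambda>k. w m * unit_vec m k) \<in> EO1_rel n I"
  proof (cases "m \<le> 2")
    case True
    then have "m = 1 \<or> m = 2" using m by auto
    then show ?thesis using assms by (auto simp: esd_multiple EO1_rel_one)
  next
    case False
    then show ?thesis
      unfolding esd_unit_vec_eq_oe using sig_bounds_ge3[of m n] m by (intro oe_1i_mem_EO1_rel) auto
  qed
qed (use assms n_ge_3 in auto)

lemma esd_e2_mem_EO1_rel:
  assumes "is_vec n w" "w 1 = 0" "\<And>k. w k \<in> I"
  shows "esd n (unit_vec 2) w \<in> EO1_rel n I"
proof (rule esd_unit_vec_mem_EO1_rel_of_pieces)
  fix m assume m: "1 \<le> m" "m \<le> 2*n"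
  show "esd n (unit_vec 2) (\<lambda>k. w m * unit_vec m k) \<in> EO1_rel n I"
  proof (cases "m \<le> 2")
    case True
    then have "m = 1 \<or> m = 2" using m by auto
    then show ?thesis using assms by (auto simp: esd_multiple EO1_rel_one)
  next
    case False
    have "esd n (unit_vec 2) (\<lambda>k. w m * unit_vec m k) = oe n m 1 (- w m)"
      unfolding esd_unit_vec_eq_oe by (subst oe_swap) simp
    then show ?thesis
      using False m oe_j1_mem_EO1_rel[of m "- w m"] ideal_minus[OF ideal assms(3)] by auto
  qed
qed (use assms n_ge_3 in auto)

text \<open>For such \<open>u, v\<close>, \<open>esd n u v\<close> lies in \<open>O\<^sub>2\<^sub>n(R)\<close> and is congruent to \<open>1\<close> modulo \<open>I\<close>.\<close>

definition admissible :: "(nat \<Rightarrow> 'a) \<Rightarrow> (nat \<Rightarrow> 'a) \<Rightarrow> bool" where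
  "admissible u v \<longleftrightarrow> is_vec n u \<and> is_vec n v \<and> qform n u = 0 \<and> qform n v = 0 \<and> bform n u v = 0
     \<and> (\<forall>k. v k \<in> I)"

lemma esd_mem_EO1_rel_off_first_pair:
  assumes adm: "admissible u v" and z: "u 1 = 0" "u 2 = 0" "v 1 = 0" "v 2 = 0"
  shows "esd n u v \<in> EO1_rel n I"
proof -
  have s: "is_vec n u" "is_vec n v" and q: "qform n u = 0" "qform n v = 0" "bform n u v = 0"
    and vI: "\<And>k. v k \<in> I"
    using adm unfolding admissible_def by auto
  have "esd n u v = esd n (unit_vec 1) u * esd n (unit_vec 2) (\<lambda>k. - v k)
      * esd n (unit_vec 1) (\<lambda>k. - u k) * esd n (unit_vec 2) v"
    using esd_commutator[of 0 n u v] n_ge_3 s z q by (simp add: numeral_2_eq_2)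
  moreover have "esd n (unit_vec 1) u \<in> EO1_rel n I" "esd n (unit_vec 1) (\<lambda>k. - u k) \<in> EO1_rel n I"
    using esd_e1_mem_EO1_rel s z by auto
  moreover have "esd n (unit_vec 2) v \<in> EO1_rel n I" "esd n (unit_vec 2) (\<lambda>k. - v k) \<in> EO1_rel n I"
    using esd_e2_mem_EO1_rel s z vI ideal_minus[OF ideal] by auto
  ultimately show ?thesis using EO1_rel_mult by metis
qed

lemma oe_mem_EO1_rel:
  assumes "oe_index n i j" "x \<in> I"
  shows "oe n i j x \<in> EO1_rel n I"
proof -
  have r: "1 \<le> i" "i \<le> 2*n" "1 \<le> j" "j \<le> 2*n" "i \<noteq> j" "i \<noteq> sig j"
    using assms unfolding oe_index_def by auto
  have nx: "- x \<in> I" using ideal_minus[OF ideal assms(2)] .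
  consider "i = 1" | "j = 1" | "i = 2" | "j = 2" | "3 \<le> i \<and> 3 \<le> j" using r by linarith
  then show ?thesis
  proof cases
    case 1
    then have "3 \<le> j" using r by (cases "j = 2") auto
    then show ?thesis using 1 r oe_1i_mem_EO1_rel[of j x] by simp
  next
    case 2
    then have "3 \<le> i" using r by (cases "i = 2") auto
    then show ?thesis using 2 r oe_j1_mem_EO1_rel[of i x] assms by simp
  next
    case 3
    then have "3 \<le> j" using r by (cases "j = 1") auto
    moreover have "oe n i j x = oe n (sig j) 1 (- x)" using 3 by (subst oe_swap) simp
    ultimately show ?thesis using nx r sig_bounds_ge3[of j n] oe_j1_mem_EO1_rel[of "sig j" "- x"] by simp
  next
    case 4
    then have "3 \<le> i" using r by (cases "i = 1") auto
    moreover have "oe n i j x = oe n 1 (sig i) (- x)" using 4 by (subst oe_swap) simp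
    ultimately show ?thesis using r sig_bounds_ge3[of i n] oe_1i_mem_EO1_rel[of "sig i" "- x"] by simp
  next
    case 5
    have sj: "3 \<le> sig j" "sig j \<le> 2*n" using 5 r sig_bounds_ge3[of j n] by auto
    have "unit_vec (sig j) (sig i) = (0::'a)" "unit_vec i j = (0::'a)" using r by (simp_all add: unit_vec_def)
    then have "admissible (unit_vec i) (\<lambda>k. x * unit_vec (sig j) k)"
      unfolding admissible_def using r sj assms(2) ideal_mult_right[OF ideal] by auto
    then show ?thesis unfolding oe_eq_esd
      by (rule esd_mem_EO1_rel_off_first_pair) (use 5 sj in \<open>auto simp: unit_vec_def\<close>)
  qed
qed

lemma esd_unit_vec_mem_EO1_rel:
  assumes h: "1 \<le> h" "h \<le> 2*n" and w: "is_vec n w" "w (sig h) = 0" "\<And>k. w k \<in> I"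
  shows "esd n (unit_vec h) w \<in> EO1_rel n I"
proof (rule esd_unit_vec_mem_EO1_rel_of_pieces[OF h w(1,2)])
  fix m assume m: "1 \<le> m" "m \<le> 2*n"
  show "esd n (unit_vec h) (\<lambda>k. w m * unit_vec m k) \<in> EO1_rel n I"
  proof (cases "m = h \<or> m = sig h")
    case True
    then show ?thesis using w by (auto simp: esd_multiple EO1_rel_one)
  next
    case False
    then have "oe_index n h (sig m)" unfolding oe_index_def using h m sig_bounds[of m n] by auto
    then show ?thesis unfolding esd_unit_vec_eq_oe using oe_mem_EO1_rel w(3) by auto
  qed
qed

end

context relative_EO
begin

lemma oe_conj_oe_1i_mem_EO1_rel:
  assumes ij: "3 \<le> i" "i \<le> 2*n" "3 \<le> j" "j \<le> 2*n" "oe_index n i j" and m: "3 \<le> m" "m \<le> 2*n"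
  shows "oe n i j c * oe n 1 m a * oe n i j (- c) \<in> EO1_rel n I"
proof -
  let ?b = "\<lambda>k. c * unit_vec (sig j) k" and ?w = "\<lambda>k. a * unit_vec (sig m) k"
  have s3: "3 \<le> sig j" "sig j \<le> 2*n" "3 \<le> sig m" "sig m \<le> 2*n" using sig_bounds_ge3 ij m by auto
  have z: "unit_vec i 1 = (0::'a)" "unit_vec i 2 = (0::'a)" "unit_vec (sig j) 1 = (0::'a)"
    "unit_vec (sig j) 2 = (0::'a)" "unit_vec (sig m) 2 = (0::'a)"
    using ij s3 by (auto intro!: unit_vec_other)
  have "esd_vec n (unit_vec i) ?b (unit_vec 1) = unit_vec 1"
    using ij z n_ge_3 by (simp add: esd_vec_def)
  then have "oe n i j c * oe n 1 m a * oe n i j (- c) = esd n (unit_vec 1) (esd_vec n (unit_vec i) ?b ?w)"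
    using oe_conj_esd[OF ij(5), of "unit_vec 1" ?w c] n_ge_3 s3 by (simp add: oe_eq_esd)
  moreover have "esd n (unit_vec 1) (esd_vec n (unit_vec i) ?b ?w) \<in> EO1_rel n I"
    by (rule esd_e1_mem_EO1_rel) (use ij s3 z in \<open>simp_all add: esd_vec_def\<close>)
  ultimately show ?thesis by simp
qed

lemma oe_conj_oe_j1_mem_EO1_rel:
  assumes ij: "3 \<le> i" "i \<le> 2*n" "3 \<le> j" "j \<le> 2*n" "oe_index n i j"
    and m: "3 \<le> m" "m \<le> 2*n" and x: "x \<in> I"
  shows "oe n i j c * oe n m 1 x * oe n i j (- c) \<in> EO1_rel n I"
proof -
  let ?b = "\<lambda>k. c * unit_vec (sig j) k" and ?x = "\<lambda>k. x * unit_vec 2 k"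
  let ?y = "esd_vec n (unit_vec i) ?b (unit_vec m)"
  have r: "i \<noteq> j" using ij(5) unfolding oe_index_def by auto
  have s3: "3 \<le> sig i" "sig i \<le> 2*n" "3 \<le> sig j" "sig j \<le> 2*n" using sig_bounds_ge3 ij by auto
  have z: "unit_vec i 1 = (0::'a)" "unit_vec 2 (sig i) = (0::'a)" "unit_vec 2 j = (0::'a)"
    "unit_vec (sig j) 1 = (0::'a)" "unit_vec (sig j) (sig i) = (0::'a)" "unit_vec m 1 = (0::'a)"
    using ij s3 r m by (auto intro!: unit_vec_other)
  have qa: "qform n (unit_vec i) = 0" "bform n (unit_vec i) ?b = 0" using ij z by auto
  have "esd_vec n (unit_vec i) ?b ?x = ?x"
    using ij z n_ge_3 by (simp add: esd_vec_def)
  then have "oe n i j c * oe n m 1 x * oe n i j (- c) = esd n ?y ?x"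
    using oe_conj_esd[OF ij(5), of "unit_vec m" ?x c] n_ge_3 m by (simp add: oe_eq_esd)
  also have "\<dots> = esd n (unit_vec 2) (\<lambda>k. (- x) * ?y k)"
    using esd_swap[of n ?y] esd_scale[of n "- x" "unit_vec 2" ?y] qform_esd_vec[OF qa] by simp
  finally have "oe n i j c * oe n m 1 x * oe n i j (- c) = esd n (unit_vec 2) (\<lambda>k. (- x) * ?y k)" .
  moreover have "esd n (unit_vec 2) (\<lambda>k. (- x) * ?y k) \<in> EO1_rel n I"
  proof (rule esd_e2_mem_EO1_rel)
    show "- x * ?y k \<in> I" for k using ideal_mult_right[OF ideal ideal_minus[OF ideal x]] .
  qed (use ij m s3 z in \<open>simp_all add: esd_vec_def\<close>)
  ultimately show ?thesis by simp
qed

lemma oe_normalizes_EO1_rel: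
  assumes "3 \<le> i" "i \<le> 2*n" "3 \<le> j" "j \<le> 2*n" "oe_index n i j"
  shows "normalizes n (EO1_rel n I) (oe n i j c)"
  unfolding EO1_rel_eq
  by (rule normalizes_gen_subgroup[OF EO1_gens_carrier EO1_gens_invertible, where s' = "oe n i j (- c)"])
    (use oe_inverse[OF assms(5)] oe_conj_oe_1i_mem_EO1_rel[OF assms] oe_conj_oe_j1_mem_EO1_rel[OF assms]
      in \<open>auto simp: EO1_gens_def EO1_rel_eq\<close>)

lemma oe_1i_normalizes_EO1_rel:
  assumes "3 \<le> m" "m \<le> 2*n"
  shows "normalizes n (EO1_rel n I) (oe n 1 m a)"
  unfolding EO1_rel_eq
proof (rule normalizes_member[OF EO1_gens_carrier])
  show "oe n 1 m a \<in> gen_subgroup n EO1_gens" "oe n 1 m (- a) \<in> gen_subgroup n EO1_gens"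
    using oe_1i_mem_EO1_rel assms unfolding EO1_rel_eq by blast+
  show "oe n 1 m a * oe n 1 m (- a) = 1\<^sub>m (2*n)" "oe n 1 m (- a) * oe n 1 m a = 1\<^sub>m (2*n)"
    using oe_inverse oe_index_1[OF assms] by blast+
qed

lemma esd_unit_vec_piece_normalizes_EO1_rel:
  assumes h: "3 \<le> h" "h \<le> 2*n" and m: "1 \<le> m" "m \<le> 2*n" and c0: "m = sig h \<or> m = 2 \<Longrightarrow> c = 0"
  shows "normalizes n (EO1_rel n I) (esd n (unit_vec h) (\<lambda>k. c * unit_vec m k))"
proof -
  have sh: "3 \<le> sig h" "sig h \<le> 2*n" using sig_bounds_ge3 h by auto
  have one: "normalizes n (EO1_rel n I) (1\<^sub>m (2*n))"
    using normalizes_one EO1_rel_carrier by blast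
  consider "m = h" | "m = sig h \<or> m = 2" | "m = 1" | "3 \<le> m" "m \<noteq> h" "m \<noteq> sig h"
    using m by linarith
  then show ?thesis
  proof cases
    case 1
    then show ?thesis using esd_multiple[of n "unit_vec h" c] one by simp
  next
    case 2
    then show ?thesis using c0 one by simp
  next
    case 3
    have "esd n (unit_vec h) (\<lambda>k. c * unit_vec m k) = oe n 1 (sig h) (- c)"
      unfolding esd_unit_vec_eq_oe 3 by (subst oe_swap) simp
    then show ?thesis using oe_1i_normalizes_EO1_rel[OF sh] by simp
  next
    case 4
    have "3 \<le> sig m" "sig m \<le> 2*n" using sig_bounds_ge3 4 m by auto
    moreover from this have "oe_index n h (sig m)" unfolding oe_index_def using 4 h by auto
    ultimately show ?thesis unfolding esd_unit_vec_eq_oe using oe_normalizes_EO1_rel h by blast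
  qed
qed

lemma esd_unit_vec_normalizes_EO1_rel:
  assumes "3 \<le> h" "h \<le> 2*n" "is_vec n w" "w (sig h) = 0" "w 2 = 0"
  shows "normalizes n (EO1_rel n I) (esd n (unit_vec h) w)"
proof -
  have "esd n (unit_vec h) w \<in> {X. normalizes n (EO1_rel n I) X}"
  proof (rule esd_unit_vec_mem)
    show "1\<^sub>m (2*n) \<in> {X. normalizes n (EO1_rel n I) X}"
      using normalizes_one EO1_rel_carrier by blast
    show "a * b \<in> {X. normalizes n (EO1_rel n I) X}"
      if "a \<in> {X. normalizes n (EO1_rel n I) X}" "b \<in> {X. normalizes n (EO1_rel n I) X}" for a b
      using that normalizes_mult EO1_rel_carrier by blast
    show "esd n (unit_vec h) (\<lambda>k. w m * unit_vec m k) \<in> {X. normalizes n (EO1_rel n I) X}"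
      if "1 \<le> m" "m \<le> 2*n" for m
      using esd_unit_vec_piece_normalizes_EO1_rel[OF assms(1,2) that] assms(4,5) by auto
  qed (use assms in auto)
  then show ?thesis by simp
qed

end

context relative_EO
begin

lemma admissibleD:
  assumes "admissible u v"
  shows "is_vec n u" "is_vec n v" "qform n u = 0" "qform n v = 0" "bform n u v = 0" "v k \<in> I"
  using assms unfolding admissible_def by auto

text \<open>In the commutator decomposition along the pair \<open>q\<close>, the factor \<open>esd e u\<close> normalizes
  \<open>EO\<^sup>1\<close> because \<open>u\<^sub>2 = 0\<close>, and the two \<open>f\<close>-factors lie in it.\<close>

lemma esd_mem_EO1_rel_off_pair_e2:
  assumes q: "1 \<le> q" "q < n" and adm: "admissible u v" and u2: "u 2 = 0"
    and z: "u (2*q+1) = 0" "u (2*q+2) = 0" "v (2*q+1) = 0" "v (2*q+2) = 0"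
  shows "esd n u v \<in> EO1_rel n I"
proof -
  let ?e = "unit_vec (2*q+1) :: nat \<Rightarrow> 'a" and ?f = "unit_vec (2*q+2) :: nat \<Rightarrow> 'a"
  note a = admissibleD[OF adm]
  have "esd n u v = esd n ?e u * esd n ?f (\<lambda>k. - v k) * esd n ?e (\<lambda>k. - u k) * esd n ?f v"
    by (rule esd_commutator[OF q(2) a(1,2) z a(3-5)])
  moreover have "normalizes n (EO1_rel n I) (esd n ?e u)"
    by (rule esd_unit_vec_normalizes_EO1_rel) (use q a u2 z in auto)
  moreover have "esd n ?f (\<lambda>k. - v k) \<in> EO1_rel n I" "esd n ?f v \<in> EO1_rel n I"
    by (rule esd_unit_vec_mem_EO1_rel; use q a z ideal_minus[OF ideal] in auto)+
  moreover have "esd n ?e u * esd n ?e (\<lambda>k. - u k) = 1\<^sub>m (2*n)"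
    by (rule esd_inverse) (use q a z in auto)
  ultimately show ?thesis
    using normalizes_conj[of n "EO1_rel n I" "esd n ?e u" "esd n ?e (\<lambda>k. - u k)"] EO1_rel_mult by simp
qed

lemma esd_pair_shift_mem_EO1_rel:
  assumes p: "1 \<le> p" "p < n"
    and b: "is_vec n b" "b 1 = 0" "b (2*p+1) = 0" "b (2*p+2) = 0" "\<And>k. b k \<in> I"
  shows "esd n (\<lambda>k. unit_vec (2*p+2) k - c * unit_vec 2 k) b \<in> EO1_rel n I"
proof -
  let ?f = "unit_vec (2*p+2) :: nat \<Rightarrow> 'a" and ?g = "\<lambda>k. - (c * unit_vec 2 k)"
  have z: "?f 1 = 0" "?f 2 = 0" "unit_vec 2 (2*p+1) = (0::'a)" using p by (auto simp: unit_vec_def)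
  have "esd n (\<lambda>k. ?f k + ?g k) b = esd n ?f b * esd n ?g b * esd n ?f (\<lambda>k. qform n b * ?g k)"
    by (rule esd_add_left) (use p n_ge_3 b z in auto)
  moreover have "esd n ?f b \<in> EO1_rel n I"
    by (rule esd_unit_vec_mem_EO1_rel) (use p b in auto)
  moreover have "esd n ?g b \<in> EO1_rel n I"
  proof -
    have "- (c * b k) \<in> I" for k using ideal_minus[OF ideal ideal_mult_left[OF ideal b(5)]] .
    then have "esd n (unit_vec 2) (\<lambda>k. (- c) * b k) \<in> EO1_rel n I"
      by (intro esd_e2_mem_EO1_rel) (use b in auto)
    then show ?thesis using esd_scale[of n "- c" "unit_vec 2" b] by simp
  qed
  moreover have "esd n ?f (\<lambda>k. qform n b * ?g k) \<in> EO1_rel n I"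
  proof -
    have "qform n b \<in> I" using ideal_qform[OF ideal, of b] b(5) by blast
    then have "qform n b * ?g k \<in> I" for k using ideal_mult_right[OF ideal] by blast
    then show ?thesis by (intro esd_unit_vec_mem_EO1_rel) (use p n_ge_3 z in auto)
  qed
  ultimately show ?thesis using EO1_rel_mult by simp
qed

text \<open>Here a second pair \<open>q \<noteq> p\<close> with \<open>q \<ge> 1\<close> is needed, which is where \<open>n \<ge> 3\<close> enters.\<close>

lemma esd_pair_shift_e1_mem_EO1_rel:
  assumes p: "1 \<le> p" "p < n" and y: "y \<in> I"
  shows "esd n (\<lambda>k. unit_vec (2*p+2) k - c * unit_vec 2 k) (\<lambda>k. y * (unit_vec 1 k + c * unit_vec (2*p+1) k))
    \<in> EO1_rel n I"
proof -
  let ?a = "\<lambda>k. unit_vec (2*p+2) k - c * unit_vec 2 k :: 'a"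
  let ?b = "\<lambda>k. unit_vec 1 k + c * unit_vec (2*p+1) k :: 'a"
  have "\<exists>q. 1 \<le> q \<and> q < n \<and> q \<noteq> p"
  proof (cases "p = 1")
    case True
    then show ?thesis using n_ge_3 by (intro exI[of _ 2]) auto
  next
    case False
    then show ?thesis using n_ge_3 p by (intro exI[of _ 1]) auto
  qed
  then obtain q where q: "1 \<le> q" "q < n" "q \<noteq> p" by blast
  have z: "unit_vec 1 2 = (0::'a)" "unit_vec 2 1 = (0::'a)" "unit_vec 2 (2*p+1) = (0::'a)"
    "unit_vec 1 (2*p+2) = (0::'a)" "unit_vec (2*p+1) 2 = (0::'a)" "unit_vec (2*p+2) 1 = (0::'a)"
    "unit_vec 1 (2*p+1) = (0::'a)" "unit_vec (2*p+1) 1 = (0::'a)"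
    "?a (2*q+1) = 0" "?a (2*q+2) = 0" "?b (2*q+1) = 0" "?b (2*q+2) = 0" "?b 2 = 0"
    using p q by (auto simp: unit_vec_def)
  have qa: "qform n ?a = 0" "qform n ?b = 0" "bform n ?b ?a = 0"
    using p n_ge_3 z by auto
  have "esd n ?a (\<lambda>k. y * ?b k) = esd n ?b (\<lambda>k. (- y) * ?a k)"
    using esd_swap[of n ?a "\<lambda>k. y * ?b k"] esd_scale[of n "- y" ?b ?a] qa by simp
  moreover have "admissible ?b (\<lambda>k. (- y) * ?a k)"
    unfolding admissible_def
  proof (intro conjI allI)
    show "- y * ?a k \<in> I" for k by (rule ideal_mult_right[OF ideal ideal_minus[OF ideal y]])
  qed (use p n_ge_3 qa z in auto)
  then have "esd n ?b (\<lambda>k. (- y) * ?a k) \<in> EO1_rel n I"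
    by (rule esd_mem_EO1_rel_off_pair_e2[OF q(1,2)]) (use z in auto)
  ultimately show ?thesis by simp
qed

text \<open>With \<open>e = e\<^sub>2\<^sub>p\<^sub>+\<^sub>1\<close> and \<open>f = e\<^sub>2\<^sub>p\<^sub>+\<^sub>2\<close>, conjugation by \<open>esd e (c e\<^sub>2)\<close> moves \<open>f\<close> to
  \<open>f - c e\<^sub>2\<close> and \<open>e\<^sub>1\<close> to \<open>e\<^sub>1 + c e\<close>; split off the \<open>e\<^sub>1\<close>-component of \<open>v\<close> first.\<close>

lemma esd_conj_e2_mem_EO1_rel:
  assumes p: "1 \<le> p" "p < n" and v: "is_vec n v" "\<And>k. v k \<in> I"
    and z: "v (2*p+1) = 0" "v (2*p+2) = 0"
  shows "esd n (unit_vec (2*p+1)) (\<lambda>k. c * unit_vec 2 k) * esd n (unit_vec (2*p+2)) v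
     * esd n (unit_vec (2*p+1)) (\<lambda>k. - (c * unit_vec 2 k)) \<in> EO1_rel n I"
proof -
  let ?e = "unit_vec (2*p+1) :: nat \<Rightarrow> 'a" and ?f = "unit_vec (2*p+2) :: nat \<Rightarrow> 'a"
  let ?c = "\<lambda>k. c * unit_vec 2 k" and ?y = "\<lambda>k. v 1 * unit_vec 1 k"
  let ?t = "esd n ?e ?c" and ?t' = "esd n ?e (\<lambda>k. - ?c k)"
  define b where "b = (\<lambda>k. v k - v 1 * unit_vec 1 k)"
  have units: "unit_vec 2 (2*p+1) = (0::'a)" "unit_vec 2 (2*p+2) = (0::'a)" "unit_vec 1 (2*p+1) = (0::'a)"
    "unit_vec 1 (2*p+2) = (0::'a)" "unit_vec 1 2 = (0::'a)" "unit_vec 2 1 = (0::'a)"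
    "?e 1 = 0" "?e 2 = 0" "?f 1 = 0" "?f 2 = 0" "?e (2*p+2) = 0" "?f (2*p+1) = 0"
    using p by (auto simp: unit_vec_def)
  have b: "is_vec n b" "b 1 = 0" "b (2*p+1) = 0" "b (2*p+2) = 0" "\<And>k. b k \<in> I"
    unfolding b_def using p v z units ideal_diff[OF ideal] ideal_mult_right[OF ideal] by auto
  have "esd n ?f b * esd n ?f ?y = esd n ?f (\<lambda>k. b k + ?y k)"
    by (rule esd_add_right) (use p v b units in auto)
  moreover have "(\<lambda>k. b k + ?y k) = v" unfolding b_def by auto
  ultimately have v_split: "esd n ?f v = esd n ?f b * esd n ?f ?y" by simp
  have "?t' * ?t = 1\<^sub>m (2*n)" by (rule esd_inverse(2)) (use p units in auto)
  then have "?t * esd n ?f v * ?t' = (?t * esd n ?f b * ?t') * (?t * esd n ?f ?y * ?t')"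
    unfolding v_split by (rule conj_mult[OF esd_carrier esd_carrier esd_carrier esd_carrier])
  moreover have "?t * esd n ?f b * ?t' = esd n (\<lambda>k. ?f k - c * unit_vec 2 k) b"
    and "?t * esd n ?f ?y * ?t' = esd n (\<lambda>k. ?f k - c * unit_vec 2 k) (\<lambda>k. v 1 * (unit_vec 1 k + c * ?e k))"
    using esd_conj[of n ?e ?c ?f b] esd_conj[of n ?e ?c ?f ?y] p n_ge_3 b units
    by (simp_all add: esd_vec_def fun_eq_iff) (simp_all add: algebra_simps)
  moreover have "esd n (\<lambda>k. ?f k - c * unit_vec 2 k) b \<in> EO1_rel n I"
    by (rule esd_pair_shift_mem_EO1_rel[OF p b])
  moreover have "esd n (\<lambda>k. ?f k - c * unit_vec 2 k) (\<lambda>k. v 1 * (unit_vec 1 k + c * ?e k)) \<in> EO1_rel n I"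
    by (rule esd_pair_shift_e1_mem_EO1_rel[OF p v(2)])
  ultimately show ?thesis using EO1_rel_mult by simp
qed

lemma esd_mem_EO1_rel_off_later_pair:
  assumes p: "1 \<le> p" "p < n" and adm: "admissible u v"
    and z: "u (2*p+1) = 0" "u (2*p+2) = 0" "v (2*p+1) = 0" "v (2*p+2) = 0"
  shows "esd n u v \<in> EO1_rel n I"
proof -
  let ?e = "unit_vec (2*p+1) :: nat \<Rightarrow> 'a" and ?f = "unit_vec (2*p+2) :: nat \<Rightarrow> 'a"
  let ?c = "\<lambda>k. u 2 * unit_vec 2 k" and ?u' = "\<lambda>k. u k - u 2 * unit_vec 2 k"
  note a = admissibleD[OF adm]
  have units: "unit_vec 2 (2*p+1) = (0::'a)" "unit_vec 2 (2*p+2) = (0::'a)" "unit_vec (2*p+1) (Suc 0) = (0::'a)"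
    using p by (auto simp: unit_vec_def)
  have "esd n u v = esd n ?e u * esd n ?f (\<lambda>k. - v k) * esd n ?e (\<lambda>k. - u k) * esd n ?f v"
    by (rule esd_commutator[OF p(2) a(1,2) z a(3-5)])
  moreover have "esd n ?e u = esd n ?e ?u' * esd n ?e ?c"
    "esd n ?e (\<lambda>k. - u k) = esd n ?e (\<lambda>k. - ?c k) * esd n ?e (\<lambda>k. - ?u' k)"
    using esd_add_right[of n ?e ?u' ?c] esd_add_right[of n ?e "\<lambda>k. - ?c k" "\<lambda>k. - ?u' k"] p a z units
    by simp_all
  ultimately have "esd n u v = esd n ?e ?u' * (esd n ?e ?c * esd n ?f (\<lambda>k. - v k) * esd n ?e (\<lambda>k. - ?c k))
      * esd n ?e (\<lambda>k. - ?u' k) * esd n ?f v"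
    by (simp add: mult_assoc_sq[of _ n])
  moreover have "esd n ?e ?c * esd n ?f (\<lambda>k. - v k) * esd n ?e (\<lambda>k. - ?c k) \<in> EO1_rel n I"
    by (rule esd_conj_e2_mem_EO1_rel[OF p]) (use a z ideal_minus[OF ideal] in auto)
  moreover have "normalizes n (EO1_rel n I) (esd n ?e ?u')"
    by (rule esd_unit_vec_normalizes_EO1_rel) (use p a z units in auto)
  moreover have "esd n ?e ?u' * esd n ?e (\<lambda>k. - ?u' k) = 1\<^sub>m (2*n)"
    by (rule esd_inverse) (use p a z units in auto)
  moreover have "esd n ?f v \<in> EO1_rel n I"
    by (rule esd_unit_vec_mem_EO1_rel) (use p a z in auto)
  ultimately show ?thesis
    using normalizes_conj[of n "EO1_rel n I" "esd n ?e ?u'" "esd n ?e (\<lambda>k. - ?u' k)"] EO1_rel_mult by simp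
qed

lemma esd_mem_EO1_rel_off_pair:
  assumes "p < n" "admissible u v"
    and "u (2*p+1) = 0" "u (2*p+2) = 0" "v (2*p+1) = 0" "v (2*p+2) = 0"
  shows "esd n u v \<in> EO1_rel n I"
proof (cases "p = 0")
  case True
  then show ?thesis using esd_mem_EO1_rel_off_first_pair assms by (simp add: numeral_2_eq_2)
next
  case False
  then show ?thesis by (intro esd_mem_EO1_rel_off_later_pair) (use assms in auto)
qed

lemma esd_mem_EO1_rel:
  assumes adm: "admissible u v" and h: "1 \<le> h" "h \<le> 2*n" and z: "u (sig h) = 0" "v (sig h) = 0"
  shows "esd n u v \<in> EO1_rel n I"
proof -
  note a = admissibleD[OF adm]
  let ?u' = "\<lambda>k. u k - u h * unit_vec h k" and ?v' = "\<lambda>k. v k - v h * unit_vec h k"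
  define p where "p = (h - 1) div 2"
  have es: "unit_vec h (sig h) = (0::'a)" using sig_neq_self h by (simp add: unit_vec_def)
  have vI': "?v' k \<in> I" for k using a(6) ideal_diff[OF ideal] ideal_mult_right[OF ideal] by auto
  have "esd n (unit_vec h) (\<lambda>k. - (v h * u k)) \<in> EO1_rel n I"
    by (rule esd_unit_vec_mem_EO1_rel[OF h]) (use a z ideal_minus[OF ideal] ideal_mult_right[OF ideal] in auto)
  moreover have "esd n (unit_vec h) (\<lambda>k. u h * ?v' k) \<in> EO1_rel n I"
    by (rule esd_unit_vec_mem_EO1_rel[OF h]) (use a h z es vI' ideal_mult_left[OF ideal] in auto)
  moreover have "esd n ?u' ?v' \<in> EO1_rel n I"
  proof (rule esd_mem_EO1_rel_off_pair)
    show "p < n" using h unfolding p_def by auto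
    show "admissible ?u' ?v'"
      unfolding admissible_def using a h z es vI' by (auto simp: algebra_simps)
    have "{h, sig h} = {2*p+1, 2*p+2}" using sig_pair[OF h(1)] unfolding p_def by auto
    moreover have "?u' h = 0" "?u' (sig h) = 0" "?v' h = 0" "?v' (sig h) = 0" using z es by auto
    ultimately show "?u' (2*p+1) = 0" "?u' (2*p+2) = 0" "?v' (2*p+1) = 0" "?v' (2*p+2) = 0"
      by (metis doubleton_eq_iff)+
  qed
  ultimately show ?thesis
    unfolding esd_split[OF a(1,2) h z a(3-5)] using EO1_rel_mult by simp
qed

end

section \<open>The subgroup generated by relative ESD transvections\<close>

context relative_EO
begin

definition esd_gen :: "(nat \<Rightarrow> 'a) \<Rightarrow> (nat \<Rightarrow> 'a) \<Rightarrow> bool" where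
  "esd_gen u v \<longleftrightarrow> admissible u v \<and> (\<exists>h. 1 \<le> h \<and> h \<le> 2*n \<and> u (sig h) = 0 \<and> v (sig h) = 0)"

definition ESD_gens :: "'a mat set" where
  "ESD_gens = {esd n u v | u v. esd_gen u v}"

abbreviation ESD_rel :: "'a mat set" where
  "ESD_rel \<equiv> gen_subgroup n ESD_gens"

lemma ESD_gens_carrier: "ESD_gens \<subseteq> carrier_mat (2*n) (2*n)"
  unfolding ESD_gens_def by auto

lemma ESD_rel_carrier: "ESD_rel \<subseteq> carrier_mat (2*n) (2*n)"
  using gen_subgroup_carrier[OF ESD_gens_carrier] by blast

lemma ESD_gens_inverse:
  assumes "s \<in> ESD_gens"
  shows "\<exists>t\<in>ESD_gens. s * t = 1\<^sub>m (2*n) \<and> t * s = 1\<^sub>m (2*n)"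
proof -
  obtain u v where s: "s = esd n u v" and g: "esd_gen u v" using assms unfolding ESD_gens_def by auto
  then have "esd_gen u (\<lambda>k. - v k)"
    using ideal_minus[OF ideal] unfolding esd_gen_def admissible_def by auto
  then show ?thesis using g esd_inverse[of n u v] unfolding s ESD_gens_def esd_gen_def admissible_def by blast
qed

lemma ESD_gens_invertible:
  "s \<in> ESD_gens \<Longrightarrow> \<exists>t\<in>carrier_mat (2*n) (2*n). s * t = 1\<^sub>m (2*n) \<and> t * s = 1\<^sub>m (2*n)"
  using ESD_gens_inverse ESD_gens_carrier by blast

lemma ESD_gens_inverse_mem:
  assumes "s \<in> ESD_gens" "t \<in> carrier_mat (2*n) (2*n)" "t * s = 1\<^sub>m (2*n)"
  shows "t \<in> ESD_gens"
proof -
  obtain t' where t': "t' \<in> ESD_gens" "s * t' = 1\<^sub>m (2*n)" using ESD_gens_inverse[OF assms(1)] by blast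
  have "t = t'" by (rule mat_inverse_unique[of s "2*n"]) (use t' assms ESD_gens_carrier in auto)
  then show ?thesis using t' by simp
qed

lemma ESD_rel_subset_EO1_rel: "ESD_rel \<subseteq> EO1_rel n I"
proof (rule gen_subgroup_least)
  show "ESD_gens \<subseteq> EO1_rel n I"
    unfolding ESD_gens_def esd_gen_def using esd_mem_EO1_rel by blast
  then show "t \<in> EO1_rel n I"
    if "s \<in> ESD_gens" "t \<in> carrier_mat (2*n) (2*n)" "s * t = 1\<^sub>m (2*n)" "t * s = 1\<^sub>m (2*n)" for s t
    using ESD_gens_inverse_mem that by blast
qed (use EO1_rel_one EO1_rel_mult in auto)

text \<open>Conjugation by \<open>oe n k l c = esd n e\<^sub>k (c e\<^sub>s\<^sub>i\<^sub>g \<^sub>l)\<close> keeps a generator a generator as long as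
  the witness \<open>h\<close> satisfies \<open>B(e\<^sub>h, e\<^sub>k) = B(e\<^sub>h, e\<^sub>s\<^sub>i\<^sub>g \<^sub>l) = 0\<close>.\<close>

lemma oe_conj_esd_gen_mem_ESD_gens:
  assumes kl: "oe_index n k l" and g: "admissible u v"
    and h: "1 \<le> h" "h \<le> 2*n" "u (sig h) = 0" "v (sig h) = 0" "h \<noteq> l" "h \<noteq> sig k"
  shows "oe n k l c * esd n u v * oe n k l (- c) \<in> ESD_gens"
proof -
  have r: "1 \<le> k" "k \<le> 2*n" "1 \<le> l" "l \<le> 2*n" "k \<noteq> l"
    using kl unfolding oe_index_def by auto
  let ?b = "\<lambda>m. c * unit_vec (sig l) m"
  note a = admissibleD[OF g]
  have ee: "unit_vec (sig l) (sig k) = (0::'a)" "unit_vec k (sig h) = (0::'a)" "unit_vec (sig l) (sig h) = (0::'a)"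
    using h r by (auto simp: unit_vec_def)
  have qa: "qform n (unit_vec k) = 0" "bform n (unit_vec k) ?b = 0" using r ee by auto
  have Bk: "bform n (unit_vec k) w = w (sig k)" "bform n ?b w = c * w l" for w :: "nat \<Rightarrow> 'a"
    using r sig_bounds[of l n] by auto
  have "esd_gen (esd_vec n (unit_vec k) ?b u) (esd_vec n (unit_vec k) ?b v)"
    unfolding esd_gen_def admissible_def
  proof (intro conjI allI)
    show "is_vec n (esd_vec n (unit_vec k) ?b u)" "is_vec n (esd_vec n (unit_vec k) ?b v)"
      using a r sig_bounds[of l n] by auto
    show "qform n (esd_vec n (unit_vec k) ?b u) = 0" "qform n (esd_vec n (unit_vec k) ?b v) = 0"
      "bform n (esd_vec n (unit_vec k) ?b u) (esd_vec n (unit_vec k) ?b v) = 0"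
      using qform_esd_vec[OF qa] bform_esd_vec[OF qa] a by auto
    show "esd_vec n (unit_vec k) ?b v m \<in> I" for m
    proof -
      have "esd_vec n (unit_vec k) ?b v m = v m + c * v l * unit_vec k m - v (sig k) * ?b m"
        unfolding esd_vec_def Bk using a(4) by simp
      then show ?thesis
        using ideal_diff[OF ideal ideal_add[OF ideal a(6) ideal_mult_right[OF ideal ideal_mult_left[OF ideal a(6)]]]
            ideal_mult_right[OF ideal a(6)]] by simp
    qed
    show "\<exists>h. 1 \<le> h \<and> h \<le> 2*n \<and> esd_vec n (unit_vec k) ?b u (sig h) = 0 \<and> esd_vec n (unit_vec k) ?b v (sig h) = 0"
      using h ee by (intro exI[of _ h]) (simp add: esd_vec_def)
  qed
  then show ?thesis unfolding oe_conj_esd[OF kl a(1,2)] ESD_gens_def by blast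
qed

lemma oe_conj_esd_unit_vec_mem_ESD_rel:
  assumes kl: "oe_index n k l" and h: "1 \<le> h" "h \<le> 2*n"
    and w: "is_vec n w" "w (sig h) = 0" "\<And>k. w k \<in> I"
  shows "oe n k l c * esd n (unit_vec h) w * oe n k l (- c) \<in> ESD_rel"
proof -
  let ?t = "oe n k l c" and ?t' = "oe n k l (- c)"
  have inv: "?t * ?t' = 1\<^sub>m (2*n)" "?t' * ?t = 1\<^sub>m (2*n)" using oe_inverse[OF kl] by auto
  let ?G = "{A \<in> carrier_mat (2*n) (2*n). ?t * A * ?t' \<in> ESD_rel}"
  have "esd n (unit_vec h) w \<in> ?G"
  proof (rule esd_unit_vec_mem[OF _ _ h w(1,2)])
    show "1\<^sub>m (2*n) \<in> ?G" using inv gen_subgroup.one by simp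
    show "a * b \<in> ?G" if "a \<in> ?G" "b \<in> ?G" for a b
      using that conj_mult[of ?t n ?t' a b] inv gen_subgroup_mult[OF ESD_gens_carrier] by auto
    fix m assume m: "1 \<le> m" "m \<le> 2*n"
    obtain h' where h': "1 \<le> h'" "h' \<le> 2*n" "h' \<noteq> l" "h' \<noteq> sig k" "h' \<noteq> sig h" "h' \<noteq> sig m"
      using exists_index_avoiding[of "2*n" l "sig k" "sig h" "sig m"] n_ge_3 by auto
    have "sig h' \<noteq> h" "sig h' \<noteq> m" using h' by (metis sig_sig)+
    then have "unit_vec h (sig h') = (0::'a)" "w m * unit_vec m (sig h') = 0"
      by (auto simp: unit_vec_def)
    moreover have "admissible (unit_vec h) (\<lambda>k. w m * unit_vec m k)"
    proof -
      have "w m * unit_vec m (sig h) = 0" "w m * unit_vec h (sig m) = 0"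
        using w(2) by (auto simp: unit_vec_def)
      then show ?thesis unfolding admissible_def using h m w(3) ideal_mult_right[OF ideal] by auto
    qed
    ultimately have "?t * esd n (unit_vec h) (\<lambda>k. w m * unit_vec m k) * ?t' \<in> ESD_gens"
      by (intro oe_conj_esd_gen_mem_ESD_gens[OF kl _ h'(1,2) _ _ h'(3,4)])
    then show "esd n (unit_vec h) (\<lambda>k. w m * unit_vec m k) \<in> ?G"
      using gen_subgroup_gen[OF ESD_gens_carrier] by auto
  qed
  then show ?thesis by simp
qed

text \<open>If the witness \<open>h\<close> is bad for \<open>(k, l)\<close>, split \<open>esd u v\<close> with \<open>esd_split\<close>: the last factor
  then has the good witness \<open>sig h\<close>.\<close>

lemma oe_conj_esd_gen_mem_ESD_rel:
  assumes kl: "oe_index n k l" and g: "esd_gen u v"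
  shows "oe n k l c * esd n u v * oe n k l (- c) \<in> ESD_rel"
proof -
  obtain h where h: "1 \<le> h" "h \<le> 2*n" "u (sig h) = 0" "v (sig h) = 0" and adm: "admissible u v"
    using g unfolding esd_gen_def by auto
  note a = admissibleD[OF adm]
  let ?t = "oe n k l c" and ?t' = "oe n k l (- c)"
  show ?thesis
  proof (cases "h \<noteq> l \<and> h \<noteq> sig k")
    case True
    then show ?thesis
      using oe_conj_esd_gen_mem_ESD_gens[OF kl adm h] gen_subgroup_gen[OF ESD_gens_carrier] by auto
  next
    case False
    let ?u' = "\<lambda>k. u k - u h * unit_vec h k" and ?v' = "\<lambda>k. v k - v h * unit_vec h k"
    have es: "unit_vec h (sig h) = (0::'a)" using sig_neq_self h by (simp add: unit_vec_def)
    have vI': "?v' m \<in> I" for m using a(6) ideal_diff[OF ideal] ideal_mult_right[OF ideal] by auto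
    have "?t * esd n (unit_vec h) (\<lambda>k. - (v h * u k)) * ?t' \<in> ESD_rel"
      by (rule oe_conj_esd_unit_vec_mem_ESD_rel[OF kl h(1,2)])
        (use a h ideal_minus[OF ideal] ideal_mult_right[OF ideal] in auto)
    moreover have "?t * esd n (unit_vec h) (\<lambda>k. u h * ?v' k) * ?t' \<in> ESD_rel"
      by (rule oe_conj_esd_unit_vec_mem_ESD_rel[OF kl h(1,2)])
        (use a h es vI' ideal_mult_left[OF ideal] in auto)
    moreover have "?t * esd n ?u' ?v' * ?t' \<in> ESD_rel"
    proof -
      have "admissible ?u' ?v'"
        unfolding admissible_def using a h es vI' by (auto simp: algebra_simps)
      moreover have "k \<noteq> l" "1 \<le> k" using kl unfolding oe_index_def by auto
      then have "sig h \<noteq> l" "sig h \<noteq> sig k"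
        using False h(1) sig_neq_self[of h] sig_neq_self[of k] by (metis sig_sig)+
      ultimately show ?thesis
        using oe_conj_esd_gen_mem_ESD_gens[OF kl, of ?u' ?v' "sig h"] sig_bounds[OF h(1,2)] es
          gen_subgroup_gen[OF ESD_gens_carrier] by auto
    qed
    moreover have "?t * esd n u v * ?t' = (?t * esd n (unit_vec h) (\<lambda>k. - (v h * u k)) * ?t')
        * ((?t * esd n (unit_vec h) (\<lambda>k. u h * ?v' k) * ?t') * (?t * esd n ?u' ?v' * ?t'))"
      unfolding esd_split[OF a(1,2) h a(3-5)]
      by (simp only: conj_mult[OF oe_carrier oe_carrier esd_carrier mult_carrier_sq[OF esd_carrier esd_carrier]
          oe_inverse(2)[OF kl]] conj_mult[OF oe_carrier oe_carrier esd_carrier esd_carrier oe_inverse(2)[OF kl]])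
    ultimately show ?thesis using gen_subgroup_mult[OF ESD_gens_carrier] by simp
  qed
qed

lemma oe_normalizes_ESD_rel: "oe_index n k l \<Longrightarrow> normalizes n ESD_rel (oe n k l c)"
  by (rule normalizes_gen_subgroup[OF ESD_gens_carrier ESD_gens_invertible, where s' = "oe n k l (- c)"])
    (use oe_inverse oe_conj_esd_gen_mem_ESD_rel in \<open>auto simp: ESD_gens_def\<close>)

lemma EO_normalizes_ESD_rel: "g \<in> EO n \<Longrightarrow> normalizes n ESD_rel g"
proof -
  have "EO n \<subseteq> {g. normalizes n ESD_rel g}"
    unfolding EO_def
  proof (rule gen_subgroup_least)
    show "1\<^sub>m (2*n) \<in> {g. normalizes n ESD_rel g}" using normalizes_one[OF ESD_rel_carrier] by simp
    show "a * b \<in> {g. normalizes n ESD_rel g}"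
      if "a \<in> {g. normalizes n ESD_rel g}" "b \<in> {g. normalizes n ESD_rel g}" for a b
      using that normalizes_mult[OF ESD_rel_carrier] by simp
    show "{oe n i j z |i j z. oe_index n i j} \<subseteq> {g. normalizes n ESD_rel g}"
      using oe_normalizes_ESD_rel by blast
    show "t \<in> {g. normalizes n ESD_rel g}"
      if gen: "s \<in> {oe n i j z |i j z. oe_index n i j}" and t: "t \<in> carrier_mat (2*n) (2*n)"
        "s * t = 1\<^sub>m (2*n)" "t * s = 1\<^sub>m (2*n)" for s t
    proof -
      obtain i j z where s: "s = oe n i j z" "oe_index n i j" using gen by blast
      have "t = oe n i j (- z)"
        by (rule mat_inverse_unique[of s "2*n"]) (use s t oe_inverse[OF s(2)] in auto)
      then show ?thesis using oe_normalizes_ESD_rel[OF s(2)] by simp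
    qed
  qed
  then show "g \<in> EO n \<Longrightarrow> normalizes n ESD_rel g" by blast
qed

lemma oe_mem_ESD_gens:
  assumes kl: "oe_index n i j" and x: "x \<in> I"
  shows "oe n i j x \<in> ESD_gens"
proof -
  have r: "1 \<le> i" "i \<le> 2*n" "1 \<le> j" "j \<le> 2*n" "i \<noteq> j" using kl unfolding oe_index_def by auto
  obtain h where h: "1 \<le> h" "h \<le> 2*n" "h \<noteq> sig i" "h \<noteq> j"
    using exists_index_avoiding[of "2*n" "sig i" j j j] n_ge_3 by auto
  then have "sig h \<noteq> i" "sig h \<noteq> sig j" by (metis sig_sig)+
  then have "unit_vec i (sig h) = (0::'a)" "x * unit_vec (sig j) (sig h) = 0"
    "x * unit_vec (sig j) (sig i) = 0" "x * unit_vec i j = 0"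
    using r by (auto simp: unit_vec_def)
  then have "esd_gen (unit_vec i) (\<lambda>k. x * unit_vec (sig j) k)"
    unfolding esd_gen_def admissible_def using r h sig_bounds[of j n] x ideal_mult_right[OF ideal] by auto
  then show ?thesis unfolding oe_eq_esd ESD_gens_def by blast
qed

lemma EO_I_subset_ESD_rel: "EO_I n I \<subseteq> ESD_rel"
  unfolding EO_I_def
proof (rule gen_subgroup_least)
  show "{oe n i j x |i j x. oe_index n i j \<and> x \<in> I} \<subseteq> ESD_rel"
    using oe_mem_ESD_gens gen_subgroup_gen[OF ESD_gens_carrier] by blast
  show "t \<in> ESD_rel" if gen: "s \<in> {oe n i j x |i j x. oe_index n i j \<and> x \<in> I}"
    and t: "t \<in> carrier_mat (2*n) (2*n)" "s * t = 1\<^sub>m (2*n)" "t * s = 1\<^sub>m (2*n)" for s t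
  proof -
    obtain i j x where s: "s = oe n i j x" "oe_index n i j" "x \<in> I" using gen by blast
    have "t = oe n i j (- x)"
      by (rule mat_inverse_unique[of s "2*n"]) (use s t oe_inverse[OF s(2)] in auto)
    then show ?thesis
      using oe_mem_ESD_gens[OF s(2) ideal_minus[OF ideal s(3)]] gen_subgroup_gen[OF ESD_gens_carrier] by simp
  qed
qed (use gen_subgroup.one gen_subgroup_mult[OF ESD_gens_carrier] in auto)

lemma EO_rel_subset_ESD_rel: "EO_rel n I \<subseteq> ESD_rel"
  unfolding EO_rel_def
proof (rule gen_subgroup_least)
  show "{g * h * g' |g h g'. g \<in> EO n \<and> h \<in> EO_I n I \<and> g' \<in> carrier_mat (2*n) (2*n)
      \<and> g * g' = 1\<^sub>m (2*n) \<and> g' * g = 1\<^sub>m (2*n)} \<subseteq> ESD_rel"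
    using normalizes_conj[OF EO_normalizes_ESD_rel] EO_I_subset_ESD_rel by blast
  then show "t \<in> ESD_rel" if "s \<in> {g * h * g' |g h g'. g \<in> EO n \<and> h \<in> EO_I n I
      \<and> g' \<in> carrier_mat (2*n) (2*n) \<and> g * g' = 1\<^sub>m (2*n) \<and> g' * g = 1\<^sub>m (2*n)}"
    "t \<in> carrier_mat (2*n) (2*n)" "s * t = 1\<^sub>m (2*n)" "t * s = 1\<^sub>m (2*n)" for s t
    using gen_subgroup_inverse[OF ESD_gens_carrier ESD_gens_invertible] that by blast
qed (use gen_subgroup.one gen_subgroup_mult[OF ESD_gens_carrier] in auto)

theorem EO_rel_subset_EO1_rel: "EO_rel n I \<subseteq> EO1_rel n I"
  using EO_rel_subset_ESD_rel ESD_rel_subset_EO1_rel by blast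

end

theorem mainTheorem3:
  fixes I :: "'a::comm_ring_1 set" and n :: nat
  assumes "is_ideal I" and "n \<ge> 3"
  shows "EO_rel n I \<subseteq> EO1_rel n I"
proof -
  interpret relative_EO n I using assms by unfold_locales
  show ?thesis by (rule EO_rel_subset_EO1_rel)
qed

end
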